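(* Let $V=\mathbb R^{p,q}$, $p=p'+p''$ with $p'\equiv3\pmod4$, and $W$ a $C\ell^0(V)$-module. Then $\Pi\mapsto b(\Pi)$ is an injective linear map from the space $(\wedge^2W^*\otimes V)^{\mathfrak o(V)}$ of $\mathfrak o(V)$-equivariant linear maps $\wedge^2W\to V$ into the space of $\hat K(p',p'')$-invariant symmetric bilinear forms on $W$.
   Context: Let $V=\mathbb{R}^{p,q}$ be $\mathbb R^{p+q}$ with the scalar product $\langle x,y\rangle=\sum_{i=1}^{p}x^iy^i-\sum_{j=p+1}^{p+q}x^jy^j$ and its standard orthonormal basis. The Clifford algebra $C\ell(V)=C\ell_{p,q}$ is generated by $V$ subject to $xy+yx=-2\langle x,y\rangle 1$, with even part $C\ell^0(V)$; $\mathrm{Pin}$ and $\mathrm{Spin}=\mathrm{Pin}\cap C\ell^0$ as usual. Identify $\mathfrak{o}(V)=\wedge^2V$ via $(x\wedge y)(z)=\langle y,z\rangle x-\langle x,z\rangle y$; $x\wedge y\mapsto-\frac14(xy-yx)$ identifies $\mathfrak o(V)$ with $\mathfrak{spin}(V)$, through which $\mathfrak o(V)$ acts on $C\ell^0(V)$-modules. $e_1,\dots,e_{p'}$ are the first $p'$ standard basis vectors; $b(\Pi)(s,t)=\langle e_1,\Pi(e_2\cdots e_{p'}s\wedge t)\rangle$. $\hat K(p',p'')\subset\mathrm{Spin}(p,q)$ is the subgroup generated by $\mathrm{Spin}(p')\cdot\mathrm{Spin}_0(p'',q)$ (the connected subgroup generated by $\mathrm{Spin}$ of the span of $e_1,\dots,e_{p'}$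 and $\mathrm{Spin}_0$ of its orthogonal complement) and $\iota(\mathrm{Pin}(q))$, where $\iota:C\ell(\mathbb R^{q,0})\to C\ell^0_{p,q}$ is the algebra embedding extending $x\mapsto e_1\cdots e_{p'}\,x'$, with $x\mapsto x'$ sending the $k$-th standard basis vector of $\mathbb R^q$ to the $(p+k)$-th standard basis vector of $V$; $\hat K$ acts on $W$ through $\mathrm{Spin}(p,q)\subset C\ell^0_{p,q}$. *)

theory Defs
  imports "HOL-Analysis.Analysis"
begin

text \<open>Indices are 0-based: the paper's e_k is index k-1.  n = p+q.
  Vectors of V are functions nat => real vanishing at indices >= n.
  Clifford elements are functions (nat set => real), the coefficient of the
  basis blade e_A = e_{a1} ... e_{ak} (a1 < ... < ak), supported on subsets of {0..<n}.\<close>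

type_synonym vec = "nat \<Rightarrow> real"
type_synonym cl = "nat set \<Rightarrow> real"

definition metric :: "nat \<Rightarrow> nat \<Rightarrow> real" where
  "metric p i = (if i < p then 1 else -1)"

definition in_V :: "nat \<Rightarrow> vec \<Rightarrow> bool" where
  "in_V n x \<longleftrightarrow> (\<forall>i\<ge>n. x i = 0)"

definition vinner :: "nat \<Rightarrow> nat \<Rightarrow> vec \<Rightarrow> vec \<Rightarrow> real" where
  "vinner p q x y = (\<Sum>i<p+q. metric p i * x i * y i)"

definition unit_vec :: "nat \<Rightarrow> vec" where
  "unit_vec k = (\<lambda>i. if i = k then 1 else 0)"

definition wedge_act :: "nat \<Rightarrow> nat \<Rightarrow> vec \<Rightarrow> vec \<Rightarrow> vec \<Rightarrow> vec" where
  "wedge_act p q x y z = (\<lambda>i. vinner p q y z * x i - vinner p q x z * y i)"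

definition in_cl :: "nat \<Rightarrow> cl \<Rightarrow> bool" where
  "in_cl n a \<longleftrightarrow> (\<forall>A. a A \<noteq> 0 \<longrightarrow> A \<subseteq> {0..<n})"

definition cl_even :: "cl \<Rightarrow> bool" where
  "cl_even a \<longleftrightarrow> (\<forall>A. a A \<noteq> 0 \<longrightarrow> even (card A))"

text \<open>e_A e_B = blade_sign A B * e_{A symdiff B}, using e_i e_j = - e_j e_i (i ~= j)
  and e_i e_i = - <e_i,e_i>.\<close>
definition blade_sign :: "nat \<Rightarrow> nat set \<Rightarrow> nat set \<Rightarrow> real" where
  "blade_sign p A B = (-1) ^ card {(a, b). a \<in> A \<and> b \<in> B \<and> b < a}
      * (\<Prod>i\<in>A \<inter> B. - metric p i)"

definition cl_mult :: "nat \<Rightarrow> nat \<Rightarrow> cl \<Rightarrow> cl \<Rightarrow> cl" where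
  "cl_mult p q a b = (\<lambda>C. \<Sum>A\<in>Pow {0..<p+q}. \<Sum>B\<in>Pow {0..<p+q}.
      if (A - B) \<union> (B - A) = C then blade_sign p A B * a A * b B else 0)"

definition cl_one :: cl where
  "cl_one = (\<lambda>A. if A = {} then 1 else 0)"

definition cl_add :: "cl \<Rightarrow> cl \<Rightarrow> cl" where
  "cl_add a b = (\<lambda>A. a A + b A)"

definition cl_scale :: "real \<Rightarrow> cl \<Rightarrow> cl" where
  "cl_scale c a = (\<lambda>A. c * a A)"

definition cl_blade :: "nat set \<Rightarrow> cl" where
  "cl_blade S = (\<lambda>A. if A = S then 1 else 0)"

definition cl_vec :: "nat \<Rightarrow> vec \<Rightarrow> cl" where
  "cl_vec n x = (\<lambda>A. if A \<subseteq> {0..<n} \<and> card A = 1 then x (the_elem A) else 0)"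

text \<open>image of x wedge y in spin(V): -1/4 (xy - yx)\<close>
definition spin_elem :: "nat \<Rightarrow> nat \<Rightarrow> vec \<Rightarrow> vec \<Rightarrow> cl" where
  "spin_elem p q x y = (\<lambda>A. - (1/4) * (cl_mult p q (cl_vec (p+q) x) (cl_vec (p+q) y) A
                                    - cl_mult p q (cl_vec (p+q) y) (cl_vec (p+q) x) A))"

fun cl_pow :: "nat \<Rightarrow> nat \<Rightarrow> cl \<Rightarrow> nat \<Rightarrow> cl" where
  "cl_pow p q a 0 = cl_one"
| "cl_pow p q a (Suc k) = cl_mult p q a (cl_pow p q a k)"

definition cl_exp :: "nat \<Rightarrow> nat \<Rightarrow> cl \<Rightarrow> cl" where
  "cl_exp p q a = (\<lambda>A. \<Sum>k. cl_pow p q a k A / fact k)"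

definition cl0_module :: "nat \<Rightarrow> nat \<Rightarrow> (cl \<Rightarrow> 'w::real_vector \<Rightarrow> 'w) \<Rightarrow> bool" where
  "cl0_module p q \<rho> \<longleftrightarrow>
     (\<forall>a. in_cl (p+q) a \<and> cl_even a \<longrightarrow> linear (\<rho> a)) \<and>
     \<rho> cl_one = id \<and>
     (\<forall>a b. in_cl (p+q) a \<and> cl_even a \<and> in_cl (p+q) b \<and> cl_even b \<longrightarrow>
         \<rho> (cl_add a b) = (\<lambda>w. \<rho> a w + \<rho> b w) \<and>
         \<rho> (cl_mult p q a b) = \<rho> a \<circ> \<rho> b) \<and>
     (\<forall>a c. in_cl (p+q) a \<and> cl_even a \<longrightarrow> \<rho> (cl_scale c a) = (\<lambda>w. c *\<^sub>R \<rho> a w))"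

inductive_set cl_gen_group :: "nat \<Rightarrow> nat \<Rightarrow> cl set \<Rightarrow> cl set" for p q S where
  one: "cl_one \<in> cl_gen_group p q S"
| gen: "g \<in> S \<Longrightarrow> g \<in> cl_gen_group p q S"
| inv: "g \<in> S \<Longrightarrow> in_cl (p+q) h \<Longrightarrow> cl_mult p q g h = cl_one \<Longrightarrow> cl_mult p q h g = cl_one
         \<Longrightarrow> h \<in> cl_gen_group p q S"
| mult: "g \<in> cl_gen_group p q S \<Longrightarrow> h \<in> cl_gen_group p q S
         \<Longrightarrow> cl_mult p q g h \<in> cl_gen_group p q S"

text \<open>Spin(p') = Pin(p') cap Cl^0 for the span of e_1..e_{p'}: generated by products
  u v of two unit vectors of that span.\<close>
definition spin_p'_gens :: "nat \<Rightarrow> nat \<Rightarrow> nat \<Rightarrow> cl set" where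
  "spin_p'_gens p q p' = {cl_mult p q (cl_vec (p+q) u) (cl_vec (p+q) v) | u v.
      (\<forall>i. i \<ge> p' \<longrightarrow> u i = 0) \<and> (\<forall>i. i \<ge> p' \<longrightarrow> v i = 0) \<and>
      \<bar>vinner p q u u\<bar> = 1 \<and> \<bar>vinner p q v v\<bar> = 1}"

text \<open>Spin_0 of the orthogonal complement span(e_{p'+1},...,e_{p+q}): the connected
  subgroup generated by exponentials of its Lie algebra spin(p'',q), the bivectors
  supported in the complement.\<close>
definition spin0_gens :: "nat \<Rightarrow> nat \<Rightarrow> nat \<Rightarrow> cl set" where
  "spin0_gens p q p' = {cl_exp p q a | a.
      \<forall>A. a A \<noteq> 0 \<longrightarrow> A \<subseteq> {p'..<p+q} \<and> card A = 2}"

text \<open>iota(Pin(q)) is generated by iota(x) = e_1...e_{p'} x' for unit vectors x of R^{q,0};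
  x' is the vector with components x'_{p+k} = x_k.\<close>
definition iota_pin_gens :: "nat \<Rightarrow> nat \<Rightarrow> nat \<Rightarrow> cl set" where
  "iota_pin_gens p q p' = {cl_mult p q (cl_blade {0..<p'}) (cl_vec (p+q) x') | x'.
      (\<forall>i. i < p \<or> i \<ge> p+q \<longrightarrow> x' i = 0) \<and> (\<Sum>i\<in>{p..<p+q}. (x' i)\<^sup>2) = 1}"

definition K_hat :: "nat \<Rightarrow> nat \<Rightarrow> nat \<Rightarrow> cl set" where
  "K_hat p q p' = cl_gen_group p q (spin_p'_gens p q p' \<union> spin0_gens p q p' \<union> iota_pin_gens p q p')"

text \<open>(wedge^2 W^* tensor V)^{o(V)}: skew bilinear maps W x W -> V, equivariant for o(V)
  (acting on W through spin(V)).\<close>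
definition equiv_maps :: "nat \<Rightarrow> nat \<Rightarrow> (cl \<Rightarrow> 'w::real_vector \<Rightarrow> 'w)
     \<Rightarrow> ('w \<Rightarrow> 'w \<Rightarrow> vec) set" where
  "equiv_maps p q \<rho> = {Pm.
     (\<forall>i. bilinear (\<lambda>s t. Pm s t i)) \<and>
     (\<forall>s t. Pm s t = (\<lambda>i. - Pm t s i)) \<and>
     (\<forall>s t. in_V (p+q) (Pm s t)) \<and>
     (\<forall>x y s t. in_V (p+q) x \<and> in_V (p+q) y \<longrightarrow>
        (\<lambda>i. Pm (\<rho> (spin_elem p q x y) s) t i + Pm s (\<rho> (spin_elem p q x y) t) i)
          = wedge_act p q x y (Pm s t))}"

text \<open>b(Pi)(s,t) = < e_1, Pi(e_2 ... e_{p'} s wedge t) >\<close>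
definition b_form :: "nat \<Rightarrow> nat \<Rightarrow> nat \<Rightarrow> (cl \<Rightarrow> 'w \<Rightarrow> 'w) \<Rightarrow> ('w \<Rightarrow> 'w \<Rightarrow> vec)
     \<Rightarrow> 'w \<Rightarrow> 'w \<Rightarrow> real" where
  "b_form p q p' \<rho> Pm s t = vinner p q (unit_vec 0) (Pm (\<rho> (cl_blade {1..<p'}) s) t)"

definition invariant_sym_forms :: "nat \<Rightarrow> nat \<Rightarrow> nat \<Rightarrow> (cl \<Rightarrow> 'w::real_vector \<Rightarrow> 'w)
     \<Rightarrow> ('w \<Rightarrow> 'w \<Rightarrow> real) set" where
  "invariant_sym_forms p q p' \<rho> = {\<beta>. bilinear \<beta> \<and> (\<forall>s t. \<beta> s t = \<beta> t s) \<and>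
     (\<forall>g\<in>K_hat p q p'. \<forall>s t. \<beta> (\<rho> g s) (\<rho> g t) = \<beta> s t)}"

end

theory Submission
  imports Defs
begin

text \<open>Write \<open>J\<^sub>a\<^sub>b\<close> for the action of \<open>e\<^sub>a e\<^sub>b\<close> on \<open>W\<close> and \<open>L\<close> for that of
  \<open>e\<^sub>2\<cdots>e\<^sub>p\<^sub>'\<close>, so that \<open>b(\<Pi>)(s,t)\<close> is the first coordinate of \<open>\<Pi>(L s, t)\<close>.
  Equivariance of \<open>\<Pi>\<close> under \<open>e\<^sub>a \<and> e\<^sub>b\<close> says that \<open>J\<^sub>a\<^sub>b\<close> is skew for \<open>\<Pi>\<close> except in
  the coordinates \<open>a\<close> and \<open>b\<close>. Moving \<open>L\<close> across \<open>\<Pi>\<close> one pair \<open>e\<^sub>2\<^sub>i e\<^sub>2\<^sub>i\<^sub>+\<^sub>1\<close> at a time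
  costs a sign per pair, \<open>(p'-1)/2\<close> signs in all, an odd number as \<open>p' \<equiv> 3 (mod 4)\<close>; with the
  skew-symmetry of \<open>\<Pi>\<close> this makes \<open>b(\<Pi>)\<close> symmetric.

  A generator \<open>g\<close> of \<open>\<hat>K\<close> in \<open>Spin(p')\<close> or in \<open>\<iota>(Pin(q))\<close> satisfies \<open>g\<^sup>2 = -1 + \<kappa> g\<close> and
  \<open>b(g s, t) + b(s, g t) = \<kappa> b(s, t)\<close> for one and the same \<open>\<kappa>\<close> (\<open>\<kappa> = -2\<langle>u,v\<rangle>\<close> for \<open>g = u v\<close>,
  \<open>\<kappa> = 0\<close> on \<open>\<iota>(Pin(q))\<close>), which forces \<open>b(g s, g t) = b(s, t)\<close>. The generators of
  \<open>Spin\<^sub>0(p'',q)\<close> are exponentials of elements acting skew-adjointly, which preserve \<open>b\<close> by the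
  Cauchy product formula. Inverses of even elements are even, so invariance passes to the whole group.

  Finally \<open>\<Pi>\<close> is recovered from \<open>b(\<Pi>)\<close>: \<open>L\<^sup>2 = -1\<close> gives the first coordinate, and \<open>J\<^sub>1\<^sub>c\<close>
  moves coordinate \<open>c\<close> to the first one.\<close>

lemma bilinear_sum_left: "bilinear h \<Longrightarrow> h (\<Sum>i\<in>I. f i) y = (\<Sum>i\<in>I. h (f i) y)"
  using linear_sum[of "\<lambda>x. h x y" f I] by (simp add: bilinear_def o_def)

lemma bilinear_sum_right: "bilinear h \<Longrightarrow> h x (\<Sum>i\<in>I. f i) = (\<Sum>i\<in>I. h x (f i))"
  using linear_sum[of "h x" f I] by (simp add: bilinear_def o_def)

lemma bilinear_invariant_of_skew:
  assumes "bilinear \<beta>"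
    and "\<And>s t. \<beta> (T s) t + \<beta> s (T t) = \<kappa> * \<beta> s t"
    and "\<And>w. T (T w) = - w + \<kappa> *\<^sub>R T w"
  shows "\<beta> (T s) (T t) = \<beta> s t"
proof -
  have lin: "linear (\<beta> s)" using assms(1) by (simp add: bilinear_def)
  have "\<beta> (T s) (T t) = \<kappa> * \<beta> s (T t) - \<beta> s (T (T t))"
    using assms(2)[of s "T t"] by simp
  also have "\<beta> s (T (T t)) = - \<beta> s t + \<kappa> * \<beta> s (T t)"
    unfolding assms(3) by (simp add: linear_diff[OF lin] linear_scale[OF lin])
  finally show ?thesis by simp
qed

lemma sum_square_skew_offdiag:
  fixes F :: "nat \<Rightarrow> nat \<Rightarrow> 'a::real_vector"
  assumes "finite K" "\<And>k l. k \<in> K \<Longrightarrow> l \<in> K \<Longrightarrow> k \<noteq> l \<Longrightarrow> F l k = - F k l"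
  shows "(\<Sum>k\<in>K. \<Sum>l\<in>K. F k l) = (\<Sum>k\<in>K. F k k)"
proof -
  let ?S = "\<Sum>k\<in>K. \<Sum>l\<in>K. F k l"
  have "?S + ?S = ?S + (\<Sum>k\<in>K. \<Sum>l\<in>K. F l k)"
    by (rule arg_cong[where f = "\<lambda>x. ?S + x"], rule sum.swap)
  also have "\<dots> = (\<Sum>k\<in>K. \<Sum>l\<in>K. F k l + F l k)"
    by (simp only: sum.distrib)
  also have "\<dots> = (\<Sum>k\<in>K. \<Sum>l\<in>K. if l = k then F k k + F k k else 0)"
  proof (intro sum.cong refl)
    fix k l assume "k \<in> K" "l \<in> K"
    then show "F k l + F l k = (if l = k then F k k + F k k else 0)"
      using assms(2)[of k l] by (cases "l = k") simp_all
  qed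
  also have "\<dots> = (\<Sum>k\<in>K. F k k) + (\<Sum>k\<in>K. F k k)"
    using assms(1) by (simp add: sum.delta sum.distrib)
  finally have "2 *\<^sub>R ?S = 2 *\<^sub>R (\<Sum>k\<in>K. F k k)" by (simp only: scaleR_2)
  then show ?thesis by simp
qed

section \<open>The Clifford product\<close>

definition swap_sign :: "nat \<Rightarrow> nat \<Rightarrow> real" where
  "swap_sign a b = (if b < a then -1 else 1)"

definition inversion_sign :: "nat set \<Rightarrow> nat set \<Rightarrow> real" where
  "inversion_sign A B = (\<Prod>a\<in>A. \<Prod>b\<in>B. swap_sign a b)"

definition square_sign :: "nat \<Rightarrow> nat set \<Rightarrow> real" where
  "square_sign p X = (\<Prod>i\<in>X. - metric p i)"

lemma power_card_inversions:
  assumes "finite A" "finite B"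
  shows "(-1::real) ^ card {(a, b). a \<in> A \<and> b \<in> B \<and> b < a} = inversion_sign A B"
proof -
  have "{(a, b). a \<in> A \<and> b \<in> B \<and> b < a} = (SIGMA a:A. {b\<in>B. b < a})" by auto
  then have "card {(a, b). a \<in> A \<and> b \<in> B \<and> b < a} = (\<Sum>a\<in>A. card {b\<in>B. b < a})"
    using assms by simp
  then have "(-1::real) ^ card {(a, b). a \<in> A \<and> b \<in> B \<and> b < a}
      = (\<Prod>a\<in>A. (-1) ^ card {b\<in>B. b < a})"
    by (simp add: power_sum)
  also have "\<dots> = inversion_sign A B"
    unfolding inversion_sign_def swap_sign_def
    using prod.inter_filter[OF assms(2), of "\<lambda>_. -1::real"] by simp
  finally show ?thesis .
qed

text \<open>Splitting the sign of \<open>e\<^sub>A e\<^sub>B\<close> into a product over pairs makes it multiplicative in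
  each argument with respect to symmetric difference; this is what gives the cocycle identity,
  i.e.\ associativity of the Clifford product.\<close>

lemma blade_sign_factor:
  assumes "finite A" "finite B"
  shows "blade_sign p A B = inversion_sign A B * square_sign p (A \<inter> B)"
  unfolding blade_sign_def square_sign_def using power_card_inversions[OF assms] by simp

lemma prod_sym_diff:
  fixes h :: "nat \<Rightarrow> real"
  assumes "finite A" "finite B" "\<And>x. h x * h x = 1"
  shows "prod h (sym_diff A B) = prod h A * prod h B"
proof -
  have split: "prod h X = prod h (X - Y) * prod h (X \<inter> Y)" if "finite X" for X Y
    using prod.Int_Diff[OF that, of h Y] by (simp add: mult.commute)
  have "prod h (A \<inter> B) * prod h (A \<inter> B) = 1"
    by (simp add: assms(3) flip: prod.distrib)
  moreover have "prod h (sym_diff A B) = prod h (A - B) * prod h (B - A)"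
    using assms by (intro prod.union_disjoint) auto
  ultimately show ?thesis
    using split[OF assms(1), of B] split[OF assms(2), of A] by (simp add: Int_commute ac_simps)
qed

lemma swap_sign_square: "swap_sign a b * swap_sign a b = 1"
  by (simp add: swap_sign_def)

lemma inversion_sign_square: "inversion_sign A B * inversion_sign A B = 1"
  by (simp add: inversion_sign_def swap_sign_square flip: prod.distrib)

lemma inversion_sign_sym_diff_left:
  assumes "finite A" "finite B"
  shows "inversion_sign (sym_diff A B) C = inversion_sign A C * inversion_sign B C"
  unfolding inversion_sign_def
  by (rule prod_sym_diff[OF assms]) (simp add: swap_sign_square flip: prod.distrib)

lemma inversion_sign_sym_diff_right:
  assumes "finite B" "finite C"
  shows "inversion_sign A (sym_diff B C) = inversion_sign A B * inversion_sign A C"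
  unfolding inversion_sign_def
  by (simp add: prod_sym_diff[OF assms] swap_sign_square prod.distrib)

lemma square_sign_sym_diff:
  assumes "finite A" "finite B"
  shows "square_sign p (sym_diff A B) = square_sign p A * square_sign p B"
  unfolding square_sign_def by (rule prod_sym_diff[OF assms]) (simp add: metric_def)

lemma blade_sign_cocycle:
  assumes "finite A" "finite B" "finite C"
  shows "blade_sign p A B * blade_sign p (sym_diff A B) C
       = blade_sign p B C * blade_sign p A (sym_diff B C)"
proof -
  have "sym_diff A B \<inter> C = sym_diff (A \<inter> C) (B \<inter> C)" "A \<inter> sym_diff B C = sym_diff (A \<inter> B) (A \<inter> C)"
    by auto
  then show ?thesis
    using assms
    by (simp add: blade_sign_factor inversion_sign_sym_diff_left inversion_sign_sym_diff_right
        square_sign_sym_diff ac_simps)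
qed

lemma blade_sign_empty_left [simp]: "blade_sign p {} B = 1"
  by (simp add: blade_sign_def)

lemma blade_sign_empty_right [simp]: "blade_sign p A {} = 1"
  by (simp add: blade_sign_def)

lemma blade_sign_abs: "\<bar>blade_sign p A B\<bar> = 1"
  unfolding blade_sign_def abs_mult power_abs abs_prod
  by (simp add: metric_def prod.neutral)

lemma cl_mult_blades:
  assumes "A \<subseteq> {0..<p+q}" "B \<subseteq> {0..<p+q}"
  shows "cl_mult p q (cl_blade A) (cl_blade B) = cl_scale (blade_sign p A B) (cl_blade (sym_diff A B))"
proof
  fix C
  have "cl_mult p q (cl_blade A) (cl_blade B) C =
    (\<Sum>A'\<in>Pow {0..<p+q}. \<Sum>B'\<in>Pow {0..<p+q}.
       if B' = B then (if A' = A then (if sym_diff A B = C then blade_sign p A B else 0) else 0) else 0)"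
    unfolding cl_mult_def cl_blade_def by (intro sum.cong refl) auto
  also have "\<dots> = (if sym_diff A B = C then blade_sign p A B else 0)"
    using assms by (simp add: sum.delta)
  finally show "cl_mult p q (cl_blade A) (cl_blade B) C
      = cl_scale (blade_sign p A B) (cl_blade (sym_diff A B)) C"
    by (simp add: cl_scale_def cl_blade_def)
qed

lemma sum_delta_collapse_left:
  assumes "finite S" "\<And>A B. A \<in> S \<Longrightarrow> B \<in> S \<Longrightarrow> f A B \<in> S"
  shows "(\<Sum>X\<in>S. \<Sum>C\<in>S. \<Sum>A\<in>S. \<Sum>B\<in>S. if f A B = X then g X C A B else 0)
       = (\<Sum>A\<in>S. \<Sum>B\<in>S. \<Sum>C\<in>S. (g (f A B) C A B :: real))"
proof -
  have "(\<Sum>X\<in>S. \<Sum>C\<in>S. \<Sum>A\<in>S. \<Sum>B\<in>S. if f A B = X then g X C A B else 0)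
      = (\<Sum>C\<in>S. \<Sum>X\<in>S. \<Sum>A\<in>S. \<Sum>B\<in>S. if f A B = X then g X C A B else 0)"
    by (rule sum.swap)
  also have "\<dots> = (\<Sum>C\<in>S. \<Sum>A\<in>S. \<Sum>X\<in>S. \<Sum>B\<in>S. if f A B = X then g X C A B else 0)"
    by (intro sum.cong refl sum.swap)
  also have "\<dots> = (\<Sum>C\<in>S. \<Sum>A\<in>S. \<Sum>B\<in>S. \<Sum>X\<in>S. if f A B = X then g X C A B else 0)"
    by (intro sum.cong refl sum.swap)
  also have "\<dots> = (\<Sum>C\<in>S. \<Sum>A\<in>S. \<Sum>B\<in>S. g (f A B) C A B)"
    using assms by (intro sum.cong refl) (simp add: sum.delta)
  also have "\<dots> = (\<Sum>A\<in>S. \<Sum>B\<in>S. \<Sum>C\<in>S. g (f A B) C A B)"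
    by (subst sum.swap) (intro sum.cong refl sum.swap)
  finally show ?thesis .
qed

lemma sum_delta_collapse_right:
  assumes "finite S" "\<And>A B. A \<in> S \<Longrightarrow> B \<in> S \<Longrightarrow> f A B \<in> S"
  shows "(\<Sum>A\<in>S. \<Sum>Y\<in>S. \<Sum>B\<in>S. \<Sum>C\<in>S. if f B C = Y then g A Y B C else 0)
       = (\<Sum>A\<in>S. \<Sum>B\<in>S. \<Sum>C\<in>S. (g A (f B C) B C :: real))"
proof -
  have "(\<Sum>A\<in>S. \<Sum>Y\<in>S. \<Sum>B\<in>S. \<Sum>C\<in>S. if f B C = Y then g A Y B C else 0)
      = (\<Sum>A\<in>S. \<Sum>B\<in>S. \<Sum>Y\<in>S. \<Sum>C\<in>S. if f B C = Y then g A Y B C else 0)"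
    by (intro sum.cong refl sum.swap)
  also have "\<dots> = (\<Sum>A\<in>S. \<Sum>B\<in>S. \<Sum>C\<in>S. \<Sum>Y\<in>S. if f B C = Y then g A Y B C else 0)"
    by (intro sum.cong refl sum.swap)
  also have "\<dots> = (\<Sum>A\<in>S. \<Sum>B\<in>S. \<Sum>C\<in>S. g A (f B C) B C)"
    using assms by (intro sum.cong refl) (simp add: sum.delta)
  finally show ?thesis .
qed

lemma if_mult_sum_distrib:
  fixes f :: "'a \<Rightarrow> real"
  assumes "finite I"
  shows "(if P then a * (\<Sum>i\<in>I. f i) * b else 0) = (\<Sum>i\<in>I. if P then a * f i * b else 0)"
    and "(if P then a * b * (\<Sum>i\<in>I. f i) else 0) = (\<Sum>i\<in>I. if P then a * b * f i else 0)"
  by (simp_all add: sum_distrib_left sum_distrib_right)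

lemma cl_mult_assoc: "cl_mult p q (cl_mult p q x y) z = cl_mult p q x (cl_mult p q y z)"
proof
  fix D
  let ?S = "Pow {0..<p+q}"
  let ?sg = "blade_sign p"
  have closed: "\<And>A B. A \<in> ?S \<Longrightarrow> B \<in> ?S \<Longrightarrow> sym_diff A B \<in> ?S" by auto
  have "cl_mult p q (cl_mult p q x y) z D =
     (\<Sum>X\<in>?S. \<Sum>C\<in>?S. \<Sum>A\<in>?S. \<Sum>B\<in>?S. if sym_diff A B = X then
        (if sym_diff X C = D then ?sg X C * (?sg A B * x A * y B) * z C else 0) else 0)"
    unfolding cl_mult_def
    by (intro sum.cong refl)
      (simp add: if_mult_sum_distrib if_distrib[of "\<lambda>u. _ * u * _"] cong: if_cong,
        intro sum.cong refl, auto)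
  also have "\<dots> = (\<Sum>A\<in>?S. \<Sum>B\<in>?S. \<Sum>C\<in>?S.
        if sym_diff (sym_diff A B) C = D then ?sg (sym_diff A B) C * (?sg A B * x A * y B) * z C else 0)"
    by (rule sum_delta_collapse_left[OF _ closed]) simp
  also have "\<dots> = (\<Sum>A\<in>?S. \<Sum>B\<in>?S. \<Sum>C\<in>?S.
        if sym_diff A (sym_diff B C) = D then ?sg A (sym_diff B C) * x A * (?sg B C * y B * z C) else 0)"
  proof (intro sum.cong refl)
    fix A B C assume "A \<in> ?S" "B \<in> ?S" "C \<in> ?S"
    then have "finite A" "finite B" "finite C" by (auto intro: finite_subset)
    moreover have "sym_diff (sym_diff A B) C = sym_diff A (sym_diff B C)" by auto
    ultimately show "(if sym_diff (sym_diff A B) C = D then ?sg (sym_diff A B) C * (?sg A B * x A * y B) * z C else 0)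
      = (if sym_diff A (sym_diff B C) = D then ?sg A (sym_diff B C) * x A * (?sg B C * y B * z C) else 0)"
      using blade_sign_cocycle[of A B C p] by (simp add: ac_simps)
  qed
  also have "\<dots> = (\<Sum>A\<in>?S. \<Sum>Y\<in>?S. \<Sum>B\<in>?S. \<Sum>C\<in>?S. if sym_diff B C = Y then
        (if sym_diff A Y = D then ?sg A Y * x A * (?sg B C * y B * z C) else 0) else 0)"
    by (rule sum_delta_collapse_right[OF _ closed, symmetric]) simp
  also have "\<dots> = cl_mult p q x (cl_mult p q y z) D"
    unfolding cl_mult_def
    by (intro sum.cong refl)
      (simp add: if_mult_sum_distrib sum_distrib_left if_distrib[of "\<lambda>u. _ * u"] cong: if_cong)
  finally show "cl_mult p q (cl_mult p q x y) z D = cl_mult p q x (cl_mult p q y z) D" .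
qed

lemma cl_mult_nonzero_obtain:
  assumes "cl_mult p q x y C \<noteq> 0"
  obtains A B where "A \<subseteq> {0..<p+q}" "B \<subseteq> {0..<p+q}" "sym_diff A B = C" "x A \<noteq> 0" "y B \<noteq> 0"
proof -
  from assms obtain A where "A \<in> Pow {0..<p+q}" and
    "(\<Sum>B\<in>Pow {0..<p+q}. if sym_diff A B = C then blade_sign p A B * x A * y B else 0) \<noteq> 0"
    unfolding cl_mult_def by (rule sum.not_neutral_contains_not_neutral)
  moreover from this(2) obtain B where "B \<in> Pow {0..<p+q}" and
    "(if sym_diff A B = C then blade_sign p A B * x A * y B else 0) \<noteq> 0"
    by (rule sum.not_neutral_contains_not_neutral)
  ultimately show ?thesis using that by (auto split: if_splits)
qed

lemma in_cl_mult: "in_cl (p+q) (cl_mult p q x y)"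
  unfolding in_cl_def by (blast elim: cl_mult_nonzero_obtain)

lemma cl_mult_lincomb_left:
  assumes "finite I"
  shows "cl_mult p q (\<lambda>C. \<Sum>i\<in>I. c i * f i C) y = (\<lambda>C. \<Sum>i\<in>I. c i * cl_mult p q (f i) y C)"
proof
  fix C
  let ?S = "Pow {0..<p+q}"
  have "cl_mult p q (\<lambda>C. \<Sum>i\<in>I. c i * f i C) y C =
     (\<Sum>A\<in>?S. \<Sum>B\<in>?S. \<Sum>i\<in>I. c i * (if sym_diff A B = C then blade_sign p A B * f i A * y B else 0))"
    unfolding cl_mult_def using assms
    by (intro sum.cong refl) (simp add: sum_distrib_left sum_distrib_right ac_simps)
  also have "\<dots> = (\<Sum>i\<in>I. \<Sum>A\<in>?S. \<Sum>B\<in>?S. c i * (if sym_diff A B = C then blade_sign p A B * f i A * y B else 0))"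
    by (subst sum.swap) (intro sum.cong refl sum.swap)
  finally show "cl_mult p q (\<lambda>C. \<Sum>i\<in>I. c i * f i C) y C = (\<Sum>i\<in>I. c i * cl_mult p q (f i) y C)"
    unfolding cl_mult_def by (simp add: sum_distrib_left)
qed

lemma cl_mult_lincomb_right:
  assumes "finite I"
  shows "cl_mult p q x (\<lambda>C. \<Sum>i\<in>I. c i * f i C) = (\<lambda>C. \<Sum>i\<in>I. c i * cl_mult p q x (f i) C)"
proof
  fix C
  let ?S = "Pow {0..<p+q}"
  have "cl_mult p q x (\<lambda>C. \<Sum>i\<in>I. c i * f i C) C =
     (\<Sum>A\<in>?S. \<Sum>B\<in>?S. \<Sum>i\<in>I. c i * (if sym_diff A B = C then blade_sign p A B * x A * f i B else 0))"
    unfolding cl_mult_def using assms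
    by (intro sum.cong refl) (simp add: sum_distrib_left sum_distrib_right ac_simps)
  also have "\<dots> = (\<Sum>i\<in>I. \<Sum>A\<in>?S. \<Sum>B\<in>?S. c i * (if sym_diff A B = C then blade_sign p A B * x A * f i B else 0))"
    by (subst sum.swap) (intro sum.cong refl sum.swap)
  finally show "cl_mult p q x (\<lambda>C. \<Sum>i\<in>I. c i * f i C) C = (\<Sum>i\<in>I. c i * cl_mult p q x (f i) C)"
    unfolding cl_mult_def by (simp add: sum_distrib_left)
qed

lemma cl_mult_scale_left: "cl_mult p q (cl_scale c x) y = cl_scale c (cl_mult p q x y)"
  unfolding cl_mult_def cl_scale_def
  by (rule ext) (simp add: sum_distrib_left if_distrib[of "\<lambda>u. c * u"] ac_simps cong: if_cong)

lemma cl_mult_scale_right: "cl_mult p q x (cl_scale c y) = cl_scale c (cl_mult p q x y)"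
  unfolding cl_mult_def cl_scale_def
  by (rule ext) (simp add: sum_distrib_left if_distrib[of "\<lambda>u. c * u"] ac_simps cong: if_cong)

lemma cl_mult_add_left: "cl_mult p q (cl_add x y) z = cl_add (cl_mult p q x z) (cl_mult p q y z)"
  unfolding cl_mult_def cl_add_def
  by (rule ext) (simp add: sum.distrib[symmetric], intro sum.cong refl, auto simp: algebra_simps)

lemma cl_mult_add_right: "cl_mult p q x (cl_add y z) = cl_add (cl_mult p q x y) (cl_mult p q x z)"
  unfolding cl_mult_def cl_add_def
  by (rule ext) (simp add: sum.distrib[symmetric], intro sum.cong refl, auto simp: algebra_simps)

lemma cl_mult_zero_right: "cl_mult p q x (\<lambda>_. 0) = (\<lambda>_. 0)"
  by (rule ext) (simp add: cl_mult_def cong: if_cong)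

lemma cl_scale_scale: "cl_scale c (cl_scale d x) = cl_scale (c * d) x"
  by (simp add: cl_scale_def mult.assoc)

lemma cl_scale_one: "cl_scale 1 x = x"
  by (simp add: cl_scale_def)

lemma cl_one_mult:
  assumes "in_cl (p+q) x"
  shows "cl_mult p q cl_one x = x"
proof
  fix C
  let ?S = "Pow {0..<p+q}"
  have "cl_mult p q cl_one x C = (\<Sum>B\<in>?S. \<Sum>A\<in>?S. if A = {} then (if B = C then x B else 0) else 0)"
    unfolding cl_mult_def cl_one_def by (subst sum.swap) (intro sum.cong refl, auto)
  also have "\<dots> = (\<Sum>B\<in>?S. if B = C then x B else 0)"
    by (intro sum.cong refl) (simp add: sum.delta)
  also have "\<dots> = x C"
    using assms unfolding in_cl_def by (simp add: sum.delta') blast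
  finally show "cl_mult p q cl_one x C = x C" .
qed

lemma cl_mult_one:
  assumes "in_cl (p+q) x"
  shows "cl_mult p q x cl_one = x"
proof
  fix C
  let ?S = "Pow {0..<p+q}"
  have "cl_mult p q x cl_one C = (\<Sum>A\<in>?S. \<Sum>B\<in>?S. if B = {} then (if A = C then x A else 0) else 0)"
    unfolding cl_mult_def cl_one_def by (intro sum.cong refl) auto
  also have "\<dots> = (\<Sum>A\<in>?S. if A = C then x A else 0)"
    by (intro sum.cong refl) (simp add: sum.delta)
  also have "\<dots> = x C"
    using assms unfolding in_cl_def by (simp add: sum.delta') blast
  finally show "cl_mult p q x cl_one C = x C" .
qed

lemma cl_blade_empty: "cl_blade {} = cl_one"
  by (simp add: cl_blade_def cl_one_def)

lemma in_cl_blade: "A \<subseteq> {0..<n} \<Longrightarrow> in_cl n (cl_blade A)"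
  by (simp add: in_cl_def cl_blade_def)

lemma in_cl_one: "in_cl n cl_one"
  by (simp add: in_cl_def cl_one_def)

lemma in_cl_vec: "in_cl n (cl_vec n x)"
  by (auto simp: in_cl_def cl_vec_def split: if_splits)

lemma card_sym_diff:
  assumes "finite A" "finite B"
  shows "card (sym_diff A B) + 2 * card (A \<inter> B) = card A + card B"
proof -
  have "card (sym_diff A B) = card (A - B) + card (B - A)"
    using assms by (intro card_Un_disjoint) auto
  moreover have "card A = card (A - B) + card (A \<inter> B)" "card B = card (B - A) + card (A \<inter> B)"
    using card_Int_Diff[OF assms(1), of B] card_Int_Diff[OF assms(2), of A] by (simp_all add: Int_commute)
  ultimately show ?thesis by simp
qed

lemma cl_mult_parity:
  assumes "\<And>A. x A \<noteq> 0 \<Longrightarrow> even (card A) = ex"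
    and "\<And>B. y B \<noteq> 0 \<Longrightarrow> even (card B) = ey"
    and "cl_mult p q x y C \<noteq> 0"
  shows "even (card C) = (ex = ey)"
proof -
  obtain A B where AB: "A \<subseteq> {0..<p+q}" "B \<subseteq> {0..<p+q}" "sym_diff A B = C" "x A \<noteq> 0" "y B \<noteq> 0"
    using assms(3) by (rule cl_mult_nonzero_obtain)
  then have "finite A" "finite B" by (auto intro: finite_subset)
  then have "even (card C + 2 * card (A \<inter> B)) = even (card A + card B)"
    using card_sym_diff AB(3) by metis
  then show ?thesis using AB(4,5) assms(1,2) by auto
qed

definition in_cl0 :: "nat \<Rightarrow> cl \<Rightarrow> bool" where
  "in_cl0 n a \<longleftrightarrow> in_cl n a \<and> cl_even a"

definition cl_odd :: "cl \<Rightarrow> bool" where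
  "cl_odd a \<longleftrightarrow> (\<forall>A. a A \<noteq> 0 \<longrightarrow> odd (card A))"

lemma in_cl0_mult: "in_cl0 (p+q) x \<Longrightarrow> in_cl0 (p+q) y \<Longrightarrow> in_cl0 (p+q) (cl_mult p q x y)"
  unfolding in_cl0_def cl_even_def using cl_mult_parity[of x True y True p q] in_cl_mult by blast

lemma in_cl0_mult_odd: "cl_odd x \<Longrightarrow> cl_odd y \<Longrightarrow> in_cl0 (p+q) (cl_mult p q x y)"
  unfolding in_cl0_def cl_even_def cl_odd_def using cl_mult_parity[of x False y False p q] in_cl_mult
  by blast

lemma in_cl0_one: "in_cl0 n cl_one"
  by (simp add: in_cl0_def in_cl_one) (simp add: cl_even_def cl_one_def)

lemma in_cl0_scale: "in_cl0 n x \<Longrightarrow> in_cl0 n (cl_scale c x)"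
  by (auto simp: in_cl0_def in_cl_def cl_even_def cl_scale_def)

lemma in_cl0_lincomb:
  assumes "\<And>i. i \<in> I \<Longrightarrow> in_cl0 n (f i)"
  shows "in_cl0 n (\<lambda>C. \<Sum>i\<in>I. c i * f i C)"
proof -
  have "\<exists>i\<in>I. f i A \<noteq> 0" if "(\<Sum>i\<in>I. c i * f i A) \<noteq> 0" for A
    using that by (metis (mono_tags, lifting) mult_zero_right sum.neutral)
  then show ?thesis using assms unfolding in_cl0_def in_cl_def cl_even_def by metis
qed

lemma in_cl0_blade: "A \<subseteq> {0..<n} \<Longrightarrow> even (card A) \<Longrightarrow> in_cl0 n (cl_blade A)"
  by (simp add: in_cl0_def in_cl_blade) (simp add: cl_even_def cl_blade_def)

lemma cl_odd_blade: "odd (card A) \<Longrightarrow> cl_odd (cl_blade A)"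
  by (simp add: cl_odd_def cl_blade_def)

lemma cl_odd_vec: "cl_odd (cl_vec n x)"
  by (simp add: cl_odd_def cl_vec_def)

lemma in_cl0_inverse:
  assumes "in_cl0 (p+q) g" "in_cl (p+q) h"
    and "cl_mult p q g h = cl_one" "cl_mult p q h g = cl_one"
  shows "in_cl0 (p+q) h"
proof -
  define h0 where "h0 = (\<lambda>A. if even (card A) then h A else 0)"
  define h1 where "h1 = (\<lambda>A. if even (card A) then 0 else h A)"
  have parity: "\<And>A. h0 A \<noteq> 0 \<Longrightarrow> even (card A) = True" "\<And>A. h1 A \<noteq> 0 \<Longrightarrow> even (card A) = False"
    "\<And>A. g A \<noteq> 0 \<Longrightarrow> even (card A) = True"
    using assms(1) by (auto simp: h0_def h1_def in_cl0_def cl_even_def)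
  have "cl_mult p q g h1 C = 0" for C
  proof (cases "even (card C)")
    case True
    then show ?thesis using cl_mult_parity[OF parity(3,2)] by fastforce
  next
    case False
    have "h = cl_add h0 h1" by (rule ext) (simp add: h0_def h1_def cl_add_def)
    then have "cl_mult p q g h C = cl_mult p q g h0 C + cl_mult p q g h1 C"
      by (simp only: cl_mult_add_right) (simp add: cl_add_def)
    moreover have "cl_mult p q g h0 C = 0" "cl_one C = 0"
      using cl_mult_parity[OF parity(3,1)] False by (fastforce simp: cl_one_def)+
    ultimately show ?thesis using assms(3) by simp
  qed
  then have odd_part: "cl_mult p q g h1 = (\<lambda>_. 0)" by (rule ext)
  \<comment> \<open>\<open>g\<close> kills the odd part \<open>h1\<close> of \<open>h\<close>, so \<open>h1 = (h g) h1 = 0\<close>\<close>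
  have "in_cl (p+q) h1" using assms(2) by (simp add: in_cl_def h1_def)
  then have "h1 = cl_mult p q (cl_mult p q h g) h1" by (simp add: assms(4) cl_one_mult)
  also have "\<dots> = (\<lambda>_. 0)" by (simp add: cl_mult_assoc odd_part cl_mult_zero_right)
  finally have "h1 = (\<lambda>_. 0)" .
  then show ?thesis using assms(2) unfolding in_cl0_def cl_even_def by (metis h1_def)
qed

section \<open>Basis vectors and the Clifford relation\<close>

abbreviation cl_e :: "nat \<Rightarrow> cl" where
  "cl_e a \<equiv> cl_blade {a}"

lemma cl_vec_unit_vec: "a < n \<Longrightarrow> cl_vec n (unit_vec a) = cl_e a"
  by (rule ext) (auto simp: cl_vec_def cl_blade_def unit_vec_def card_Suc_eq)

lemma cl_vec_as_sum: "cl_vec n x = (\<lambda>C. \<Sum>a<n. x a * cl_e a C)"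
proof
  fix C
  show "cl_vec n x C = (\<Sum>a<n. x a * cl_e a C)"
  proof (cases "\<exists>a<n. C = {a}")
    case True
    then obtain a where "a < n" "C = {a}" by blast
    then have "(\<Sum>a'<n. x a' * cl_e a' C) = (\<Sum>a'<n. if a' = a then x a' else 0)"
      by (intro sum.cong refl) (auto simp: cl_blade_def)
    then show ?thesis using \<open>a < n\<close> \<open>C = {a}\<close> by (simp add: cl_vec_def)
  next
    case False
    then show ?thesis by (auto simp: cl_vec_def cl_blade_def card_Suc_eq intro!: sum.neutral[symmetric])
  qed
qed

lemma inversion_sign_singleton_swap:
  assumes "finite A"
  shows "inversion_sign {x} A = (-1) ^ card (A - {x}) * inversion_sign A {x}"
proof -
  have "inversion_sign {x} A * inversion_sign A {x} = (\<Prod>b\<in>A. if b \<noteq> x then -1 else 1)"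
    using assms by (auto simp: inversion_sign_def swap_sign_def prod.distrib[symmetric] intro!: prod.cong)
  also have "\<dots> = (-1) ^ card (A - {x})"
    using prod.inter_filter[OF assms, of "\<lambda>_. -1::real" "\<lambda>b. b \<noteq> x"]
    by (simp add: set_diff_eq)
  finally show ?thesis
    by (metis inversion_sign_square mult.assoc mult.right_neutral)
qed

lemma cl_e_blade_commute:
  assumes "A \<subseteq> {0..<p+q}" "x < p+q"
  shows "cl_mult p q (cl_e x) (cl_blade A)
       = cl_scale ((-1) ^ card (A - {x})) (cl_mult p q (cl_blade A) (cl_e x))"
proof -
  have "finite A" using assms(1) finite_subset by blast
  then have "blade_sign p {x} A = (-1) ^ card (A - {x}) * blade_sign p A {x}"
    by (simp add: blade_sign_factor inversion_sign_singleton_swap Int_commute)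
  moreover have "sym_diff {x} A = sym_diff A {x}" by auto
  ultimately show ?thesis using assms by (simp add: cl_mult_blades cl_scale_def mult.assoc)
qed

lemma cl_e_commute_even_blade:
  assumes "A \<subseteq> {0..<p+q}" "x < p+q" "even (card A)"
  shows "cl_mult p q (cl_e x) (cl_blade A)
       = cl_scale (if x \<in> A then -1 else 1) (cl_mult p q (cl_blade A) (cl_e x))"
proof -
  have "finite A" using assms(1) finite_subset by blast
  then have "odd (card (A - {x}))" if "x \<in> A"
    using that assms(3) by (simp add: card_gt_0_iff) (metis card_0_eq empty_iff even_diff_nat odd_one)
  then show ?thesis using cl_e_blade_commute[OF assms(1,2)] assms(3) by (simp add: cl_scale_one)
qed

lemma cl_e_anticommute:
  assumes "a < p+q" "b < p+q" "a \<noteq> b"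
  shows "cl_mult p q (cl_e b) (cl_e a) = cl_scale (-1) (cl_mult p q (cl_e a) (cl_e b))"
  using cl_e_blade_commute[of "{a}" p q b] assms by simp

lemma cl_e_square:
  assumes "a < p+q"
  shows "cl_mult p q (cl_e a) (cl_e a) = cl_scale (- metric p a) cl_one"
proof -
  have "{(a', b). a' = a \<and> b = a \<and> b < a'} = {}" by auto
  then have "card {(a', b). a' = a \<and> b = a \<and> b < a'} = 0" by (simp only: card.empty)
  then have "blade_sign p {a} {a} = - metric p a" unfolding blade_sign_def by simp
  then show ?thesis using assms by (simp add: cl_mult_blades cl_blade_empty)
qed

lemma cl_blade_insert_min:
  assumes "A \<subseteq> {0..<p+q}" "x < p+q" "\<forall>a\<in>A. x < a"
  shows "cl_blade (insert x A) = cl_mult p q (cl_e x) (cl_blade A)"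
proof -
  have "finite A" "x \<notin> A" using assms finite_subset by auto
  moreover have "inversion_sign {x} A = 1"
    using \<open>finite A\<close> assms(3) by (auto simp: inversion_sign_def swap_sign_def intro!: prod.neutral)
  ultimately have "blade_sign p {x} A = 1" "sym_diff {x} A = insert x A"
    by (auto simp: blade_sign_factor square_sign_def)
  then show ?thesis using assms by (simp add: cl_mult_blades cl_scale_def)
qed

lemma cl_e_mult_pair:
  assumes "x < y" "y < p+q"
  shows "cl_mult p q (cl_e x) (cl_e y) = cl_blade {x, y}"
  using cl_blade_insert_min[of "{y}" p q x] assms by simp

lemma cl_e_cancel_left:
  assumes "a < p+q" "in_cl (p+q) z"
  shows "cl_mult p q (cl_e a) (cl_mult p q (cl_e a) z) = cl_scale (- metric p a) z"
  by (simp add: cl_mult_assoc[symmetric] cl_e_square assms cl_mult_scale_left cl_one_mult)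

lemma cl_e_anticommute_left:
  assumes "a < p+q" "b < p+q" "a \<noteq> b"
  shows "cl_mult p q (cl_e b) (cl_mult p q (cl_e a) z)
       = cl_scale (-1) (cl_mult p q (cl_e a) (cl_mult p q (cl_e b) z))"
  by (simp add: cl_mult_assoc[symmetric] cl_e_anticommute[OF assms] cl_mult_scale_left)

lemma cl_e_pair_compose:
  assumes "a < p+q" "b < p+q" "c < p+q"
  shows "cl_mult p q (cl_mult p q (cl_e a) (cl_e b)) (cl_mult p q (cl_e b) (cl_e c))
       = cl_scale (- metric p b) (cl_mult p q (cl_e a) (cl_e c))"
  using assms by (simp add: cl_mult_assoc cl_e_cancel_left in_cl_blade cl_mult_scale_right)

lemma cl_e_pair_compose_swapped:
  assumes "a < p+q" "b < p+q" "c < p+q" "a \<noteq> b" "b \<noteq> c" "a \<noteq> c"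
  shows "cl_mult p q (cl_mult p q (cl_e b) (cl_e c)) (cl_mult p q (cl_e a) (cl_e b))
       = cl_scale (metric p b) (cl_mult p q (cl_e a) (cl_e c))"
proof -
  let ?m = "cl_mult p q"
  have "?m (?m (cl_e b) (cl_e c)) (?m (cl_e a) (cl_e b)) = ?m (cl_e b) (?m (cl_e c) (?m (cl_e a) (cl_e b)))"
    by (simp only: cl_mult_assoc)
  also have "\<dots> = ?m (cl_e b) (?m (cl_e a) (?m (cl_e b) (cl_e c)))"
    using assms
    by (simp add: cl_e_anticommute_left[of a p q c] cl_e_anticommute[of b p q c] cl_mult_scale_right
        cl_scale_scale cl_scale_one)
  also have "\<dots> = cl_scale (-1) (?m (cl_e a) (?m (cl_e b) (?m (cl_e b) (cl_e c))))"
    using assms by (simp add: cl_e_anticommute_left[of a p q b])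
  also have "\<dots> = cl_scale (metric p b) (?m (cl_e a) (cl_e c))"
    using assms by (simp add: cl_e_cancel_left in_cl_blade cl_mult_scale_right cl_scale_scale)
  finally show ?thesis .
qed

lemma cl_e_pair_commute_even_blade:
  assumes "A \<subseteq> {0..<p+q}" "x < p+q" "y < p+q" "even (card A)"
  shows "cl_mult p q (cl_mult p q (cl_e x) (cl_e y)) (cl_blade A)
       = cl_scale (if (x \<in> A) = (y \<in> A) then 1 else -1)
           (cl_mult p q (cl_blade A) (cl_mult p q (cl_e x) (cl_e y)))"
proof -
  let ?m = "cl_mult p q"
  let ?s = "\<lambda>z. if z \<in> A then -1 else (1::real)"
  have "?m (?m (cl_e x) (cl_e y)) (cl_blade A) = ?m (cl_e x) (?m (cl_e y) (cl_blade A))"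
    by (rule cl_mult_assoc)
  also have "\<dots> = cl_scale (?s y) (?m (?m (cl_e x) (cl_blade A)) (cl_e y))"
    unfolding cl_e_commute_even_blade[OF assms(1,3,4)] by (simp only: cl_mult_scale_right cl_mult_assoc)
  also have "\<dots> = cl_scale (?s y * ?s x) (?m (?m (cl_blade A) (cl_e x)) (cl_e y))"
    unfolding cl_e_commute_even_blade[OF assms(1,2,4)] by (simp only: cl_mult_scale_left cl_scale_scale)
  also have "?s y * ?s x = (if (x \<in> A) = (y \<in> A) then 1 else -1)"
    by simp
  finally show ?thesis by (simp add: cl_mult_assoc)
qed

lemma cl_vec_mult_as_sum:
  "cl_mult p q (cl_vec (p+q) x) (cl_vec (p+q) y)
     = (\<lambda>C. \<Sum>a<p+q. x a * (\<Sum>b<p+q. y b * cl_mult p q (cl_e a) (cl_e b) C))"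
  unfolding cl_vec_as_sum[of "p+q" x] cl_vec_as_sum[of "p+q" y]
  by (simp add: cl_mult_lincomb_left cl_mult_lincomb_right)

lemma cl_e_anticommutator:
  assumes "a < p+q" "b < p+q"
  shows "cl_mult p q (cl_e a) (cl_e b) C + cl_mult p q (cl_e b) (cl_e a) C
       = (if a = b then -2 * metric p a * cl_one C else 0)"
  using assms cl_e_anticommute[OF assms] by (auto simp: cl_e_square cl_scale_def)

lemma cl_vec_anticommutator:
  "cl_mult p q (cl_vec (p+q) x) (cl_vec (p+q) y) C + cl_mult p q (cl_vec (p+q) y) (cl_vec (p+q) x) C
     = -2 * vinner p q x y * cl_one C"
proof -
  let ?E = "\<lambda>a b. cl_mult p q (cl_e a) (cl_e b) C"
  have "cl_mult p q (cl_vec (p+q) y) (cl_vec (p+q) x) C = (\<Sum>b<p+q. \<Sum>a<p+q. x a * y b * ?E b a)"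
    by (simp add: cl_vec_mult_as_sum sum_distrib_left mult_ac)
  also have "\<dots> = (\<Sum>a<p+q. \<Sum>b<p+q. x a * y b * ?E b a)"
    by (rule sum.swap)
  finally have "cl_mult p q (cl_vec (p+q) x) (cl_vec (p+q) y) C + cl_mult p q (cl_vec (p+q) y) (cl_vec (p+q) x) C
      = (\<Sum>a<p+q. \<Sum>b<p+q. x a * y b * (?E a b + ?E b a))"
    by (simp add: cl_vec_mult_as_sum sum_distrib_left mult_ac sum.distrib[symmetric] distrib_left)
  also have "\<dots> = (\<Sum>a<p+q. \<Sum>b<p+q. if b = a then x a * y a * (-2 * metric p a * cl_one C) else 0)"
    by (intro sum.cong refl) (simp add: cl_e_anticommutator)
  also have "\<dots> = -2 * vinner p q x y * cl_one C"
    unfolding vinner_def by (simp add: sum_distrib_left sum_distrib_right mult_ac)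
  finally show ?thesis .
qed

lemma cl_vec_square:
  assumes "vinner p q x x = 1"
  shows "cl_mult p q (cl_vec (p+q) x) (cl_vec (p+q) x) = cl_scale (-1) cl_one"
  using cl_vec_anticommutator[of p q x x] assms by (auto simp: cl_scale_def)

lemma cl_vec_swap:
  "cl_mult p q (cl_vec (p+q) y) (cl_vec (p+q) x)
    = cl_add (cl_scale (-1) (cl_mult p q (cl_vec (p+q) x) (cl_vec (p+q) y)))
        (cl_scale (-2 * vinner p q x y) cl_one)"
  using cl_vec_anticommutator[of p q x y] by (auto simp: cl_scale_def cl_add_def algebra_simps)

lemma cl_vec_pair_square:
  assumes "vinner p q u u = 1" "vinner p q v v = 1"
  shows "cl_mult p q (cl_mult p q (cl_vec (p+q) u) (cl_vec (p+q) v)) (cl_mult p q (cl_vec (p+q) u) (cl_vec (p+q) v))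
     = cl_add (cl_scale (-1) cl_one) (cl_scale (-2 * vinner p q u v) (cl_mult p q (cl_vec (p+q) u) (cl_vec (p+q) v)))"
proof -
  let ?m = "cl_mult p q"
  let ?U = "cl_vec (p+q) u" and ?V = "cl_vec (p+q) v"
  let ?c = "vinner p q u v"
  have "?m (?m ?U ?V) (?m ?U ?V) = ?m ?U (?m (?m ?V ?U) ?V)"
    by (simp add: cl_mult_assoc)
  also have "?m (?m ?V ?U) ?V = cl_add (cl_scale (-1) (?m ?U (?m ?V ?V))) (cl_scale (-2 * ?c) ?V)"
    unfolding cl_vec_swap[of p q v u]
    by (simp add: cl_mult_add_left cl_mult_scale_left cl_mult_assoc cl_one_mult in_cl_vec)
  also have "\<dots> = cl_add ?U (cl_scale (-2 * ?c) ?V)"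
    using assms(2) by (simp add: cl_vec_square cl_mult_scale_right cl_mult_one in_cl_vec cl_scale_scale cl_scale_one)
  also have "?m ?U \<dots> = cl_add (cl_scale (-1) cl_one) (cl_scale (-2 * ?c) (?m ?U ?V))"
    using assms(1) by (simp add: cl_mult_add_right cl_mult_scale_right cl_vec_square)
  finally show ?thesis .
qed

lemma vinner_unit_vec: "a < p+q \<Longrightarrow> vinner p q (unit_vec a) y = metric p a * y a"
  by (simp add: vinner_def unit_vec_def if_distrib[of "\<lambda>u. _ * u * _"] sum.delta cong: if_cong)

lemma spin_elem_unit_vec:
  assumes "a < p+q" "b < p+q" "a \<noteq> b"
  shows "spin_elem p q (unit_vec a) (unit_vec b) = cl_scale (-1/2) (cl_mult p q (cl_e a) (cl_e b))"
  using assms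
  by (simp add: spin_elem_def cl_vec_unit_vec cl_e_anticommute[OF assms(2,1) assms(3)[symmetric]] cl_scale_def)

lemma metric_square: "metric p i * metric p i = 1"
  by (simp add: metric_def)

lemma metric_cases: "metric p i = 1 \<or> metric p i = -1"
  by (simp add: metric_def)

section \<open>Convergence of the exponential series\<close>

lemma cl_mult_abs_bound:
  assumes "\<And>A. \<bar>x A\<bar> \<le> X" "\<And>B. \<bar>y B\<bar> \<le> Y"
  shows "\<bar>cl_mult p q x y C\<bar> \<le> real (card (Pow {0..<p+q})) * real (card (Pow {0..<p+q})) * X * Y"
proof -
  let ?S = "Pow {0..<p+q}"
  have "0 \<le> X" using assms(1)[of "{}"] by linarith
  have "\<bar>cl_mult p q x y C\<bar>
      \<le> (\<Sum>A\<in>?S. \<Sum>B\<in>?S. \<bar>if sym_diff A B = C then blade_sign p A B * x A * y B else 0\<bar>)"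
    unfolding cl_mult_def by (rule order_trans[OF sum_abs]) (intro sum_mono sum_abs)
  also have "\<dots> \<le> (\<Sum>A\<in>?S. \<Sum>B\<in>?S. X * Y)"
  proof (intro sum_mono)
    fix A B
    have "\<bar>blade_sign p A B * x A * y B\<bar> = \<bar>x A\<bar> * \<bar>y B\<bar>"
      by (simp add: abs_mult blade_sign_abs)
    also have "\<dots> \<le> X * Y"
      using assms \<open>0 \<le> X\<close> by (intro mult_mono) auto
    finally have "\<bar>blade_sign p A B * x A * y B\<bar> \<le> X * Y" .
    then show "\<bar>if sym_diff A B = C then blade_sign p A B * x A * y B else 0\<bar> \<le> X * Y"
      using \<open>0 \<le> X\<close> assms(2)[of B] by (auto intro: mult_nonneg_nonneg)
  qed
  finally show ?thesis by simp
qed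

lemma cl_pow_abs_bound:
  assumes "\<And>A. \<bar>a A\<bar> \<le> M"
  shows "\<bar>cl_pow p q a k A\<bar> \<le> (real (card (Pow {0..<p+q})) * real (card (Pow {0..<p+q})) * M) ^ k"
proof (induction k arbitrary: A)
  case 0
  then show ?case by (simp add: cl_one_def)
next
  case (Suc k)
  let ?N = "real (card (Pow {0..<p+q}))"
  have "\<bar>cl_mult p q a (cl_pow p q a k) A\<bar> \<le> ?N * ?N * M * (?N * ?N * M) ^ k"
    by (rule cl_mult_abs_bound[OF assms Suc.IH])
  then show ?case by (simp add: mult.assoc)
qed

lemma in_cl_abs_bounded:
  assumes "in_cl n a"
  obtains M where "\<And>A. \<bar>a A\<bar> \<le> M"
proof
  fix A
  show "\<bar>a A\<bar> \<le> (\<Sum>B\<in>Pow {0..<n}. \<bar>a B\<bar>)"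
  proof (cases "A \<subseteq> {0..<n}")
    case True
    then show ?thesis by (intro member_le_sum) auto
  next
    case False
    then have "a A = 0" using assms unfolding in_cl_def by blast
    then show ?thesis by (simp add: sum_nonneg)
  qed
qed

lemma summable_cl_exp_coeff:
  assumes "in_cl (p+q) a"
  shows "summable (\<lambda>k. norm (cl_pow p q a k A / fact k))"
proof -
  obtain M where M: "\<And>A. \<bar>a A\<bar> \<le> M" using in_cl_abs_bounded[OF assms] by blast
  let ?R = "real (card (Pow {0..<p+q})) * real (card (Pow {0..<p+q})) * M"
  show ?thesis
  proof (rule summable_comparison_test)
    show "\<exists>N. \<forall>k\<ge>N. norm (norm (cl_pow p q a k A / fact k)) \<le> inverse (fact k) * ?R ^ k"
      using cl_pow_abs_bound[OF M] by (auto simp: divide_simps mult.commute)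
    show "summable (\<lambda>k. inverse (fact k) * ?R ^ k)" by (rule summable_exp)
  qed
qed

lemma alternating_fact_sum:
  "(\<Sum>i\<le>m. (-1) ^ i / (fact i * fact (m - i)) :: real) = (if m = 0 then 1 else 0)"
proof (cases "m = 0")
  case False
  have "(\<Sum>i\<le>m. (-1) ^ i / (fact i * fact (m - i)) :: real)
      = (\<Sum>i\<le>m. (-1) ^ i * of_nat (m choose i)) / fact m"
    unfolding sum_divide_distrib by (intro sum.cong refl) (simp add: binomial_fact field_simps)
  also have "\<dots> = 0" using False choose_alternating_sum[of m] by simp
  finally show ?thesis using False by simp
qed simp

section \<open>Modules over the even Clifford algebra\<close>

definition even_blades :: "nat \<Rightarrow> nat set set" where
  "even_blades n = {A. A \<subseteq> {0..<n} \<and> even (card A)}"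

lemma finite_even_blades: "finite (even_blades n)"
  unfolding even_blades_def by (rule finite_subset[of _ "Pow {0..<n}"]) auto

lemma in_cl0_as_sum:
  assumes "in_cl0 n x"
  shows "x = (\<lambda>C. \<Sum>A\<in>even_blades n. x A * cl_blade A C)"
proof
  fix C
  have "(\<Sum>A\<in>even_blades n. x A * cl_blade A C) = (\<Sum>A\<in>even_blades n. if A = C then x C else 0)"
    by (intro sum.cong refl) (auto simp: cl_blade_def)
  also have "\<dots> = (if C \<in> even_blades n then x C else 0)"
    using finite_even_blades by (simp add: sum.delta')
  also have "\<dots> = x C" using assms unfolding in_cl0_def in_cl_def cl_even_def even_blades_def by auto
  finally show "x C = (\<Sum>A\<in>even_blades n. x A * cl_blade A C)" by simp
qed

locale even_clifford_module =
  fixes p q :: nat and \<rho> :: "cl \<Rightarrow> 'w::real_vector \<Rightarrow> 'w"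
  assumes module: "cl0_module p q \<rho>"
begin

lemma rho_linear: "in_cl0 (p+q) x \<Longrightarrow> linear (\<rho> x)"
  using module by (simp add: cl0_module_def in_cl0_def)

lemma rho_one [simp]: "\<rho> cl_one w = w"
  using module by (simp add: cl0_module_def)

lemma rho_mult: "in_cl0 (p+q) x \<Longrightarrow> in_cl0 (p+q) y \<Longrightarrow> \<rho> (cl_mult p q x y) w = \<rho> x (\<rho> y w)"
  using module by (simp add: cl0_module_def in_cl0_def)

lemma rho_add: "in_cl0 (p+q) x \<Longrightarrow> in_cl0 (p+q) y \<Longrightarrow> \<rho> (cl_add x y) w = \<rho> x w + \<rho> y w"
  using module by (simp add: cl0_module_def in_cl0_def)

lemma rho_scale: "in_cl0 (p+q) x \<Longrightarrow> \<rho> (cl_scale c x) w = c *\<^sub>R \<rho> x w"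
  using module by (simp add: cl0_module_def in_cl0_def)

lemma rho_commute:
  assumes "in_cl0 (p+q) x" "in_cl0 (p+q) y" "cl_mult p q x y = cl_scale c (cl_mult p q y x)"
  shows "\<rho> x (\<rho> y w) = c *\<^sub>R \<rho> y (\<rho> x w)"
  by (metis assms in_cl0_mult rho_mult rho_scale)

lemma rho_lincomb:
  assumes "finite I" "\<And>i. i \<in> I \<Longrightarrow> in_cl0 (p+q) (f i)"
  shows "\<rho> (\<lambda>C. \<Sum>i\<in>I. c i * f i C) w = (\<Sum>i\<in>I. c i *\<^sub>R \<rho> (f i) w)"
  using assms
proof (induction I rule: finite_induct)
  case empty
  have "(\<lambda>_. 0) = cl_scale 0 cl_one" by (simp add: cl_scale_def)
  then show ?case using rho_scale[OF in_cl0_one, of 0] by simp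
next
  case (insert i I)
  have "(\<lambda>C. \<Sum>j\<in>insert i I. c j * f j C) = cl_add (cl_scale (c i) (f i)) (\<lambda>C. \<Sum>j\<in>I. c j * f j C)"
    using insert by (simp add: cl_add_def cl_scale_def)
  then show ?case using insert by (simp add: rho_add in_cl0_scale in_cl0_lincomb rho_scale)
qed

lemma rho_as_blade_sum:
  assumes "in_cl0 (p+q) x"
  shows "\<rho> x w = (\<Sum>A\<in>even_blades (p+q). x A *\<^sub>R \<rho> (cl_blade A) w)"
  by (subst in_cl0_as_sum[OF assms], rule rho_lincomb[OF finite_even_blades])
    (auto simp: even_blades_def intro: in_cl0_blade)

lemma bilinear_rho_as_blade_sum:
  assumes "bilinear \<beta>" "in_cl0 (p+q) x" "in_cl0 (p+q) y"
  shows "\<beta> (\<rho> x s) (\<rho> y t) = (\<Sum>A\<in>even_blades (p+q). \<Sum>B\<in>even_blades (p+q).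
           x A * y B * \<beta> (\<rho> (cl_blade A) s) (\<rho> (cl_blade B) t))"
  unfolding rho_as_blade_sum[OF assms(2)] rho_as_blade_sum[OF assms(3)]
  using assms(1)
  by (simp add: bilinear_sum_left bilinear_sum_right bilinear_lmul bilinear_rmul sum_distrib_left mult.assoc)

lemma bilinear_skew_of_blade_skew:
  fixes \<beta> :: "'w \<Rightarrow> 'w \<Rightarrow> real"
  assumes "bilinear \<beta>" "in_cl0 (p+q) a"
    and "\<And>A s t. a A \<noteq> 0 \<Longrightarrow> \<beta> (\<rho> (cl_blade A) s) t + \<beta> s (\<rho> (cl_blade A) t) = 0"
  shows "\<beta> (\<rho> a s) t + \<beta> s (\<rho> a t) = 0"
proof -
  have "\<beta> (\<rho> a s) t + \<beta> s (\<rho> a t)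
      = (\<Sum>A\<in>even_blades (p+q). a A * (\<beta> (\<rho> (cl_blade A) s) t + \<beta> s (\<rho> (cl_blade A) t)))"
    unfolding rho_as_blade_sum[OF assms(2)] using assms(1)
    by (simp add: bilinear_sum_left bilinear_sum_right bilinear_lmul bilinear_rmul sum.distrib distrib_left)
  also have "\<dots> = 0"
    using assms(3) by (intro sum.neutral) (metis mult_eq_0_iff)
  finally show ?thesis .
qed

lemma in_cl0_cl_pow: "in_cl0 (p+q) a \<Longrightarrow> in_cl0 (p+q) (cl_pow p q a k)"
  by (induction k) (simp_all add: in_cl0_one in_cl0_mult)

lemma in_cl0_cl_exp:
  assumes "in_cl0 (p+q) a"
  shows "in_cl0 (p+q) (cl_exp p q a)"
proof -
  have "cl_exp p q a A = 0" if "\<not> (A \<subseteq> {0..<p+q} \<and> even (card A))" for A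
  proof -
    have "cl_pow p q a k A = 0" for k
      using in_cl0_cl_pow[OF assms, of k] that unfolding in_cl0_def in_cl_def cl_even_def by blast
    then show ?thesis unfolding cl_exp_def by simp
  qed
  then show ?thesis unfolding in_cl0_def in_cl_def cl_even_def by blast
qed

context
  fixes \<beta> :: "'w \<Rightarrow> 'w \<Rightarrow> real" and a :: cl
  assumes bilinear: "bilinear \<beta>" and even: "in_cl0 (p+q) a"
    and skew: "\<And>s t. \<beta> (\<rho> a s) t + \<beta> s (\<rho> a t) = 0"
begin

lemma bilinear_rho_pow_shift:
  "\<beta> (\<rho> (cl_pow p q a j) s) (\<rho> (cl_pow p q a k) t) = (-1) ^ j * \<beta> s (\<rho> (cl_pow p q a (j + k)) t)"
proof (induction j arbitrary: k)
  case (Suc j)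
  have "\<beta> (\<rho> (cl_pow p q a (Suc j)) s) (\<rho> (cl_pow p q a k) t)
      = - \<beta> (\<rho> (cl_pow p q a j) s) (\<rho> a (\<rho> (cl_pow p q a k) t))"
    using skew[of "\<rho> (cl_pow p q a j) s" "\<rho> (cl_pow p q a k) t"]
    by (simp add: rho_mult even in_cl0_cl_pow)
  also have "\<rho> a (\<rho> (cl_pow p q a k) t) = \<rho> (cl_pow p q a (Suc k)) t"
    by (simp add: rho_mult even in_cl0_cl_pow)
  finally show ?case using Suc.IH[of "Suc k"] by simp
qed simp

lemma bilinear_rho_pow_cauchy_term:
  "(\<Sum>i\<le>m. \<beta> (\<rho> (cl_pow p q a i) s) (\<rho> (cl_pow p q a (m - i)) t) / (fact i * fact (m - i)))
     = (if m = 0 then \<beta> s t else 0)"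
proof -
  have "(\<Sum>i\<le>m. \<beta> (\<rho> (cl_pow p q a i) s) (\<rho> (cl_pow p q a (m - i)) t) / (fact i * fact (m - i)))
      = (\<Sum>i\<le>m. (-1) ^ i / (fact i * fact (m - i))) * \<beta> s (\<rho> (cl_pow p q a m) t)"
    by (simp add: bilinear_rho_pow_shift sum_distrib_right)
  then show ?thesis by (simp add: alternating_fact_sum)
qed

text \<open>Multiplying out the two exponential series (Cauchy product), the \<open>m\<close>-th term is
  \<open>\<Sum>\<^sub>i \<beta>(a\<^sup>i s, a\<^sup>m\<^sup>-\<^sup>i t) / i!(m-i)!\<close>, which vanishes for \<open>m > 0\<close> because \<open>a\<close> is skew.\<close>

lemma bilinear_invariant_cl_exp:
  "\<beta> (\<rho> (cl_exp p q a) s) (\<rho> (cl_exp p q a) t) = \<beta> s t"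
proof -
  let ?E = "even_blades (p+q)"
  let ?coeff = "\<lambda>j A. cl_pow p q a j A / fact j"
  let ?c = "\<lambda>A B. \<beta> (\<rho> (cl_blade A) s) (\<rho> (cl_blade B) t)"
  let ?g = "\<lambda>A B m. (\<Sum>i\<le>m. ?coeff i A * ?coeff (m - i) B) * ?c A B"
  have "in_cl (p+q) a" using even by (simp add: in_cl0_def)
  then have "(\<lambda>m. \<Sum>i\<le>m. ?coeff i A * ?coeff (m - i) B) sums (cl_exp p q a A * cl_exp p q a B)" for A B
    unfolding cl_exp_def by (intro Cauchy_product_sums summable_cl_exp_coeff)
  then have sums: "?g A B sums (cl_exp p q a A * cl_exp p q a B * ?c A B)" for A B
    by (rule sums_mult2)
  have "\<beta> (\<rho> (cl_exp p q a) s) (\<rho> (cl_exp p q a) t)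
      = (\<Sum>A\<in>?E. \<Sum>B\<in>?E. cl_exp p q a A * cl_exp p q a B * ?c A B)"
    by (rule bilinear_rho_as_blade_sum[OF bilinear in_cl0_cl_exp[OF even] in_cl0_cl_exp[OF even]])
  also have "\<dots> = (\<Sum>m. \<Sum>A\<in>?E. \<Sum>B\<in>?E. ?g A B m)"
    using sums by (simp add: sums_iff suminf_sum summable_sum)
  also have "(\<lambda>m. \<Sum>A\<in>?E. \<Sum>B\<in>?E. ?g A B m)
      = (\<lambda>m. \<Sum>i\<le>m. \<beta> (\<rho> (cl_pow p q a i) s) (\<rho> (cl_pow p q a (m - i)) t) / (fact i * fact (m - i)))"
    using bilinear_rho_as_blade_sum[OF bilinear in_cl0_cl_pow[OF even] in_cl0_cl_pow[OF even]]
    by (simp add: sum_distrib_left sum_distrib_right sum_divide_distrib sum.swap[of _ "{.._}"] mult_ac)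
  also have "\<dots> = (\<lambda>m. if m = 0 then \<beta> s t else 0)"
    by (simp add: bilinear_rho_pow_cauchy_term)
  finally show ?thesis using sums_single[of 0 "\<lambda>_. \<beta> s t"] by (simp add: sums_iff)
qed

end

lemma cl_gen_group_invariant:
  assumes "\<And>g. g \<in> S \<Longrightarrow> in_cl0 (p+q) g \<and> (\<forall>s t. \<beta> (\<rho> g s) (\<rho> g t) = \<beta> s t)"
    and "g \<in> cl_gen_group p q S"
  shows "in_cl0 (p+q) g \<and> (\<forall>s t. \<beta> (\<rho> g s) (\<rho> g t) = \<beta> s t)"
  using assms(2)
proof (induction rule: cl_gen_group.induct)
  case one
  then show ?case by (simp add: in_cl0_one)
next
  case (gen g)
  then show ?case by (rule assms(1))
next
  case (inv g h)
  then have "in_cl0 (p+q) g" "\<forall>s t. \<beta> (\<rho> g s) (\<rho> g t) = \<beta> s t" using assms(1) by auto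
  moreover from this(1) inv have "in_cl0 (p+q) h" by (blast intro: in_cl0_inverse)
  moreover from calculation have "\<rho> g (\<rho> h w) = w" for w
    using rho_mult[of g h w] inv(3) by simp
  ultimately show ?case by metis
next
  case (mult g h)
  then show ?case by (simp add: in_cl0_mult rho_mult)
qed

definition rho_pair :: "nat \<Rightarrow> nat \<Rightarrow> 'w \<Rightarrow> 'w" where
  "rho_pair a b = \<rho> (cl_mult p q (cl_e a) (cl_e b))"

lemma in_cl0_cl_e_pair: "in_cl0 (p+q) (cl_mult p q (cl_e a) (cl_e b))"
  by (simp add: in_cl0_mult_odd cl_odd_blade)

lemma rho_pair_linear: "linear (rho_pair a b)"
  unfolding rho_pair_def by (rule rho_linear[OF in_cl0_cl_e_pair])

lemma rho_pair_antisym: "a < p+q \<Longrightarrow> b < p+q \<Longrightarrow> a \<noteq> b \<Longrightarrow> rho_pair b a w = - rho_pair a b w"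
  unfolding rho_pair_def by (simp add: cl_e_anticommute[of a p q b] rho_scale in_cl0_cl_e_pair)

lemma rho_pair_diag: "a < p+q \<Longrightarrow> rho_pair a a w = (- metric p a) *\<^sub>R w"
  unfolding rho_pair_def by (simp add: cl_e_square rho_scale in_cl0_one)

lemma rho_pair_compose:
  assumes "a < p+q" "b < p+q" "c < p+q"
  shows "rho_pair a b (rho_pair b c w) = (- metric p b) *\<^sub>R rho_pair a c w"
  unfolding rho_pair_def using assms
  by (simp add: rho_mult[symmetric] in_cl0_cl_e_pair cl_e_pair_compose rho_scale)

lemma rho_pair_compose_swapped:
  assumes "a < p+q" "b < p+q" "c < p+q" "a \<noteq> b" "b \<noteq> c" "a \<noteq> c"
  shows "rho_pair b c (rho_pair a b w) = metric p b *\<^sub>R rho_pair a c w"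
  unfolding rho_pair_def using assms
  by (simp add: rho_mult[symmetric] in_cl0_cl_e_pair cl_e_pair_compose_swapped rho_scale)

lemma rho_pair_square:
  assumes "a < p+q" "b < p+q" "a \<noteq> b"
  shows "rho_pair a b (rho_pair a b w) = (- (metric p a * metric p b)) *\<^sub>R w"
proof -
  have "rho_pair a b (rho_pair a b w) = - rho_pair a b (rho_pair b a w)"
    using assms rho_pair_antisym[of a b w] linear_neg[OF rho_pair_linear] by simp
  then show ?thesis
    using assms by (simp add: rho_pair_compose rho_pair_diag metric_square mult.commute)
qed

lemma rho_pair_commute_even_blade:
  assumes "A \<subseteq> {0..<p+q}" "a < p+q" "b < p+q" "even (card A)"
  shows "rho_pair a b (\<rho> (cl_blade A) w)
       = (if (a \<in> A) = (b \<in> A) then 1 else -1) *\<^sub>R \<rho> (cl_blade A) (rho_pair a b w)"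
  unfolding rho_pair_def
  by (rule rho_commute[OF in_cl0_cl_e_pair in_cl0_blade cl_e_pair_commute_even_blade]) (use assms in auto)

lemma rho_cl_vec_pair:
  "\<rho> (cl_mult p q (cl_vec (p+q) u) (cl_vec (p+q) v)) w
     = (\<Sum>a<p+q. u a *\<^sub>R (\<Sum>b<p+q. v b *\<^sub>R rho_pair a b w))"
proof -
  have "in_cl0 (p+q) (\<lambda>C. \<Sum>b<p+q. v b * cl_mult p q (cl_e a) (cl_e b) C)" for a
    by (rule in_cl0_lincomb) (rule in_cl0_cl_e_pair)
  then show ?thesis
    unfolding cl_vec_mult_as_sum rho_pair_def
    by (simp add: rho_lincomb in_cl0_cl_e_pair)
qed

lemma rho_cl_vec_pair_square:
  assumes "vinner p q u u = 1" "vinner p q v v = 1"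
  shows "\<rho> (cl_mult p q (cl_vec (p+q) u) (cl_vec (p+q) v)) (\<rho> (cl_mult p q (cl_vec (p+q) u) (cl_vec (p+q) v)) w)
     = - w + (-2 * vinner p q u v) *\<^sub>R \<rho> (cl_mult p q (cl_vec (p+q) u) (cl_vec (p+q) v)) w"
proof -
  have even: "in_cl0 (p+q) (cl_mult p q (cl_vec (p+q) u) (cl_vec (p+q) v))"
    by (simp add: in_cl0_mult_odd cl_odd_vec)
  then show ?thesis
    using rho_mult[OF even even, of w, symmetric]
    by (simp add: cl_vec_pair_square[OF assms] rho_add rho_scale in_cl0_scale in_cl0_one)
qed

abbreviation prefix_blade :: "nat \<Rightarrow> cl" where
  "prefix_blade j \<equiv> cl_blade {1..<2*j+1}"

lemma in_cl0_prefix_blade: "2*j < p+q \<Longrightarrow> in_cl0 (p+q) (prefix_blade j)"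
  by (rule in_cl0_blade) auto

lemma rho_prefix_blade_Suc:
  assumes "2*j+2 < p+q"
  shows "\<rho> (prefix_blade (Suc j)) w = \<rho> (prefix_blade j) (rho_pair (2*j+1) (2*j+2) w)"
proof -
  have "inversion_sign {1..<2*j+1} {2*j+1, 2*j+2} = 1"
    unfolding inversion_sign_def by (intro prod.neutral ballI) (auto simp: swap_sign_def)
  moreover have "{1..<2*j+1} \<inter> {2*j+1, 2*j+2} = {}" "sym_diff {1..<2*j+1} {2*j+1, 2*j+2} = {1..<2 * Suc j + 1}"
    by auto
  ultimately have "prefix_blade (Suc j) = cl_mult p q (prefix_blade j) (cl_blade {2*j+1, 2*j+2})"
    using assms by (simp add: cl_mult_blades blade_sign_factor square_sign_def cl_scale_one)
  also have "cl_blade {2*j+1, 2*j+2} = cl_mult p q (cl_e (2*j+1)) (cl_e (2*j+2))"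
    using assms by (simp add: cl_e_mult_pair)
  finally have "prefix_blade (Suc j) = cl_mult p q (prefix_blade j) (cl_mult p q (cl_e (2*j+1)) (cl_e (2*j+2)))" .
  moreover have "in_cl0 (p+q) (prefix_blade j)" using assms by (intro in_cl0_prefix_blade) simp
  ultimately show ?thesis unfolding rho_pair_def by (simp add: rho_mult in_cl0_cl_e_pair)
qed

lemma rho_pair_commute_prefix_blade:
  assumes "2*j+2 < p+q"
  shows "rho_pair (2*j+1) (2*j+2) (\<rho> (prefix_blade j) w) = \<rho> (prefix_blade j) (rho_pair (2*j+1) (2*j+2) w)"
  using rho_pair_commute_even_blade[of "{1..<2*j+1}" "2*j+1" "2*j+2" w] assms by simp

lemma rho_prefix_blade_square:
  assumes "2 * j < p"
  shows "\<rho> (prefix_blade j) (\<rho> (prefix_blade j) w) = (-1) ^ j *\<^sub>R w"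
  using assms
proof (induction j arbitrary: w)
  case (Suc j)
  have a: "2*j+2 < p+q" using Suc.prems by simp
  have "\<rho> (prefix_blade (Suc j)) (\<rho> (prefix_blade (Suc j)) w)
      = \<rho> (prefix_blade j) (\<rho> (prefix_blade j) (rho_pair (2*j+1) (2*j+2) (rho_pair (2*j+1) (2*j+2) w)))"
    by (simp only: rho_prefix_blade_Suc[OF a] rho_pair_commute_prefix_blade[OF a])
  also have "rho_pair (2*j+1) (2*j+2) (rho_pair (2*j+1) (2*j+2) w) = - w"
    using rho_pair_square[of "2*j+1" "2*j+2" w] a Suc.prems by (simp add: metric_def)
  finally show ?case
    using Suc.IH[of "- w"] Suc.prems linear_neg[OF rho_linear[OF in_cl0_prefix_blade]] by simp
qed (simp add: cl_blade_empty)

end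

section \<open>Equivariant skew pairings\<close>

locale equivariant_pairing = even_clifford_module p q \<rho>
  for p q :: nat and \<rho> :: "cl \<Rightarrow> 'w::real_vector \<Rightarrow> 'w" +
  fixes Pm :: "'w \<Rightarrow> 'w \<Rightarrow> vec"
  assumes equivariant: "Pm \<in> equiv_maps p q \<rho>"
begin

lemma pairing_bilinear: "bilinear (\<lambda>s t. Pm s t i)"
  using equivariant unfolding equiv_maps_def by blast

lemma pairing_antisym: "Pm s t i = - Pm t s i"
proof -
  have "Pm s t = (\<lambda>i. - Pm t s i)" using equivariant unfolding equiv_maps_def by blast
  from fun_cong[OF this, of i] show ?thesis by simp
qed

lemma pairing_outside: "p + q \<le> i \<Longrightarrow> Pm s t i = 0"
  using equivariant unfolding equiv_maps_def in_V_def by blast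

lemma pairing_scaleR_left: "Pm (c *\<^sub>R s) t i = c * Pm s t i"
  using bilinear_lmul[OF pairing_bilinear] by simp

lemma pairing_scaleR_right: "Pm s (c *\<^sub>R t) i = c * Pm s t i"
  using bilinear_rmul[OF pairing_bilinear] by simp

lemma pairing_minus_left: "Pm (- s) t i = - Pm s t i"
  using bilinear_lneg[OF pairing_bilinear] by simp

lemma pairing_minus_right: "Pm s (- t) i = - Pm s t i"
  using bilinear_rneg[OF pairing_bilinear] by simp

text \<open>Equivariance under \<open>e\<^sub>a \<and> e\<^sub>b\<close>, which acts on \<open>W\<close> as \<open>-(1/2) e\<^sub>a e\<^sub>b\<close>.\<close>

lemma pairing_rho_pair:
  assumes "a < p+q" "b < p+q" "a \<noteq> b"
  shows "Pm (rho_pair a b s) t c + Pm s (rho_pair a b t) c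
       = -2 * ((if c = a then metric p b * Pm s t b else 0) - (if c = b then metric p a * Pm s t a else 0))"
proof -
  have "in_V (p+q) (unit_vec a)" "in_V (p+q) (unit_vec b)"
    using assms by (auto simp: in_V_def unit_vec_def)
  then have "(\<lambda>i. Pm (\<rho> (spin_elem p q (unit_vec a) (unit_vec b)) s) t i
      + Pm s (\<rho> (spin_elem p q (unit_vec a) (unit_vec b)) t) i)
      = wedge_act p q (unit_vec a) (unit_vec b) (Pm s t)"
    using equivariant unfolding equiv_maps_def by blast
  from fun_cong[OF this, of c] have "Pm (\<rho> (spin_elem p q (unit_vec a) (unit_vec b)) s) t c
      + Pm s (\<rho> (spin_elem p q (unit_vec a) (unit_vec b)) t) c
      = wedge_act p q (unit_vec a) (unit_vec b) (Pm s t) c"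
    by simp
  moreover have "\<rho> (spin_elem p q (unit_vec a) (unit_vec b)) w = (-1/2) *\<^sub>R rho_pair a b w" for w
    using assms by (simp add: spin_elem_unit_vec rho_scale in_cl0_cl_e_pair rho_pair_def)
  moreover have "wedge_act p q (unit_vec a) (unit_vec b) (Pm s t) c
      = (if c = a then metric p b * Pm s t b else 0) - (if c = b then metric p a * Pm s t a else 0)"
    using assms by (simp add: wedge_act_def vinner_unit_vec) (simp add: unit_vec_def)
  ultimately show ?thesis
    by (simp add: pairing_scaleR_left pairing_scaleR_right pairing_minus_left pairing_minus_right)
qed

lemma pairing_rho_pair_skew:
  assumes "a < p+q" "b < p+q" "a \<noteq> b" "c \<noteq> a" "c \<noteq> b"
  shows "Pm (rho_pair a b s) t c = - Pm s (rho_pair a b t) c"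
  using pairing_rho_pair[OF assms(1-3), of s t c] assms(4,5) by simp

text \<open>Combining the equivariance identities for \<open>e\<^sub>a e\<^sub>b\<close>, \<open>e\<^sub>b e\<^sub>c\<close> and \<open>e\<^sub>a e\<^sub>c\<close> in coordinate \<open>a\<close>
  moves the index from \<open>c\<close> to \<open>b\<close>; a third index \<open>a\<close> is needed.\<close>

lemma pairing_rho_pair_coordinate:
  assumes "a < p+q" "b < p+q" "c < p+q" "a \<noteq> b" "b \<noteq> c" "a \<noteq> c"
  shows "Pm (rho_pair b c s) t b = - metric p c * Pm s t c"
proof -
  let ?X = "Pm (rho_pair a b (rho_pair b c s)) t a"
  let ?Y = "Pm (rho_pair b c s) (rho_pair a b t) a"
  let ?Z = "Pm s (rho_pair a c t) a"
  have e1: "?X + ?Y = -2 * (metric p b * Pm (rho_pair b c s) t b)"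
    using pairing_rho_pair[OF assms(1,2,4), of "rho_pair b c s" t a] assms by simp
  have e2: "?Y + Pm s (rho_pair b c (rho_pair a b t)) a = 0"
    using pairing_rho_pair[OF assms(2,3,5), of s "rho_pair a b t" a] assms by simp
  have e3: "Pm (rho_pair a c s) t a + ?Z = -2 * (metric p c * Pm s t c)"
    using pairing_rho_pair[OF assms(1,3,6), of s t a] assms by simp
  have c1: "?X = - metric p b * Pm (rho_pair a c s) t a"
    using rho_pair_compose[OF assms(1-3), of s] by (simp add: pairing_scaleR_left pairing_minus_left)
  have c2: "Pm s (rho_pair b c (rho_pair a b t)) a = metric p b * ?Z"
    using rho_pair_compose_swapped[OF assms, of t] by (simp add: pairing_scaleR_right)
  from metric_cases[of p b] show ?thesis
    using e1 e2 e3 c1 c2 by (elim disjE; simp only: mult_1 mult_minus1 minus_minus; linarith)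
qed

lemma pairing_prefix_blade_move:
  assumes "2*j < p+q" "c \<notin> {1..<2*j+1}"
  shows "Pm (\<rho> (prefix_blade j) s) t c = (-1) ^ j * Pm s (\<rho> (prefix_blade j) t) c"
  using assms
proof (induction j arbitrary: s t)
  case (Suc j)
  have a: "2*j+2 < p+q" and c: "c \<noteq> 2*j+1" "c \<noteq> 2*j+2" "c \<notin> {1..<2*j+1}"
    using Suc.prems by auto
  have "Pm (\<rho> (prefix_blade (Suc j)) s) t c = (-1) ^ j * Pm (rho_pair (2*j+1) (2*j+2) s) (\<rho> (prefix_blade j) t) c"
    using rho_prefix_blade_Suc[OF a] Suc.IH a c by simp
  also have "\<dots> = (-1) ^ j * (- Pm s (rho_pair (2*j+1) (2*j+2) (\<rho> (prefix_blade j) t)) c)"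
    using pairing_rho_pair_skew[of "2*j+1" "2*j+2" c s] a c by simp
  also have "\<dots> = (-1) ^ Suc j * Pm s (\<rho> (prefix_blade (Suc j)) t) c"
    using rho_pair_commute_prefix_blade[OF a] rho_prefix_blade_Suc[OF a] by simp
  finally show ?case .
qed (simp add: cl_blade_empty)

end

section \<open>The operators attached to \<open>\<hat>K(p', p'')\<close>\<close>

locale khat_setting = even_clifford_module p q \<rho>
  for p q :: nat and \<rho> :: "cl \<Rightarrow> 'w::real_vector \<Rightarrow> 'w" +
  fixes p' p'' :: nat
  assumes p_split: "p = p' + p''" and p'_mod_4: "p' mod 4 = 3"
begin

lemma p'_ge_3: "3 \<le> p'"
  using p'_mod_4 by presburger

lemma p'_le_p: "p' \<le> p"
  using p_split by simp

lemma p_pos: "0 < p"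
  using p'_ge_3 p'_le_p by simp

lemma metric_below_p': "i < p' \<Longrightarrow> metric p i = 1"
  using p'_le_p by (simp add: metric_def)

lemma card_tail_even: "even (card {1..<p'})"
  using p'_mod_4 by simp presburger

definition rho_tail :: "'w \<Rightarrow> 'w" where
  "rho_tail = \<rho> (cl_blade {1..<p'})"

lemma tail_prefix_blade: "cl_blade {1..<p'} = prefix_blade (p' div 2)"
proof -
  have "2 * (p' div 2) + 1 = p'" using p'_mod_4 by presburger
  then show ?thesis by simp
qed

lemma in_cl0_tail: "in_cl0 (p+q) (cl_blade {1..<p'})"
  using p'_le_p card_tail_even by (intro in_cl0_blade) auto

lemma rho_tail_linear: "linear rho_tail"
  unfolding rho_tail_def by (rule rho_linear[OF in_cl0_tail])

text \<open>This is where \<open>p' \<equiv> 3 (mod 4)\<close> enters: \<open>e\<^sub>2\<cdots>e\<^sub>p\<^sub>'\<close> is a product of an odd number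
  \<open>(p'-1)/2\<close> of commuting pairs \<open>e\<^sub>i e\<^sub>i\<^sub>+\<^sub>1\<close> of spacelike vectors, each squaring to \<open>-1\<close>.\<close>

lemma rho_tail_square: "rho_tail (rho_tail w) = - w"
proof -
  have "2 * (p' div 2) < p" "odd (p' div 2)" using p'_mod_4 p'_le_p by presburger+
  then show ?thesis
    unfolding rho_tail_def tail_prefix_blade using rho_prefix_blade_square[of "p' div 2" w] by simp
qed

lemma rho_pair_commute_tail:
  assumes "a < p+q" "b < p+q"
  shows "rho_pair a b (rho_tail w)
       = (if (a \<in> {1..<p'}) = (b \<in> {1..<p'}) then 1 else -1) *\<^sub>R rho_tail (rho_pair a b w)"
  unfolding rho_tail_def
  by (rule rho_pair_commute_even_blade) (use assms p'_le_p card_tail_even in auto)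

definition iota_op :: "nat \<Rightarrow> 'w \<Rightarrow> 'w" where
  "iota_op k = \<rho> (cl_mult p q (cl_blade {0..<p'}) (cl_e k))"

lemma in_cl0_head_e: "in_cl0 (p+q) (cl_mult p q (cl_blade {0..<p'}) (cl_e k))"
proof -
  have "odd p'" using p'_mod_4 by presburger
  then show ?thesis by (intro in_cl0_mult_odd cl_odd_blade) simp_all
qed

lemma in_cl0_iota_gen: "in_cl0 (p+q) (cl_mult p q (cl_blade {0..<p'}) (cl_vec (p+q) x))"
proof -
  have "odd p'" using p'_mod_4 by presburger
  then show ?thesis by (intro in_cl0_mult_odd cl_odd_blade cl_odd_vec) simp
qed

lemma iota_op_eq:
  assumes "p' \<le> k" "k < p+q"
  shows "iota_op k w = rho_pair 0 k (rho_tail w)"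
proof -
  have tail: "{1..<p'} \<subseteq> {0..<p+q}" using p'_le_p by auto
  have "insert 0 {1..<p'} = {0..<p'}" using p'_ge_3 by auto
  then have "cl_blade {0..<p'} = cl_mult p q (cl_e 0) (cl_blade {1..<p'})"
    using cl_blade_insert_min[OF tail, of 0] p_pos by simp
  then have "cl_mult p q (cl_blade {0..<p'}) (cl_e k) = cl_mult p q (cl_e 0) (cl_mult p q (cl_blade {1..<p'}) (cl_e k))"
    by (simp add: cl_mult_assoc)
  also have "cl_mult p q (cl_blade {1..<p'}) (cl_e k) = cl_mult p q (cl_e k) (cl_blade {1..<p'})"
    using cl_e_commute_even_blade[OF tail assms(2) card_tail_even] assms by (simp add: cl_scale_one)
  finally have "cl_mult p q (cl_blade {0..<p'}) (cl_e k) = cl_mult p q (cl_mult p q (cl_e 0) (cl_e k)) (cl_blade {1..<p'})"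
    by (simp add: cl_mult_assoc)
  then show ?thesis
    unfolding iota_op_def rho_pair_def rho_tail_def using rho_mult[OF in_cl0_cl_e_pair in_cl0_tail] by simp
qed

lemma rho_pair_0_commute_tail:
  assumes "p' \<le> k" "k < p+q"
  shows "rho_pair 0 k (rho_tail w) = rho_tail (rho_pair 0 k w)"
  using rho_pair_commute_tail[of 0 k w] assms p'_ge_3 p_pos by simp

lemma iota_op_compose:
  assumes "p' \<le> k" "k < p+q" "p' \<le> l" "l < p+q"
  shows "iota_op k (iota_op l w) = - rho_pair k l w"
proof -
  have "iota_op k (iota_op l w) = rho_pair 0 k (rho_pair 0 l (rho_tail (rho_tail w)))"
    using assms by (simp add: iota_op_eq rho_pair_0_commute_tail)
  also have "\<dots> = - rho_pair 0 k (rho_pair 0 l w)"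
    by (simp add: rho_tail_square linear_neg[OF rho_pair_linear])
  also have "rho_pair 0 k (rho_pair 0 l w) = - rho_pair k 0 (rho_pair 0 l w)"
    using rho_pair_antisym[of 0 k] assms p'_ge_3 p_pos by simp
  also have "rho_pair k 0 (rho_pair 0 l w) = (- metric p 0) *\<^sub>R rho_pair k l w"
    using rho_pair_compose[of k 0 l w] assms p_pos by simp
  finally show ?thesis using metric_below_p'[of 0] p'_ge_3 by simp
qed


lemma rho_iota_gen:
  assumes "\<forall>i. i < p \<or> i \<ge> p+q \<longrightarrow> x i = 0"
  shows "\<rho> (cl_mult p q (cl_blade {0..<p'}) (cl_vec (p+q) x)) w = (\<Sum>k\<in>{p..<p+q}. x k *\<^sub>R iota_op k w)"
proof -
  have "cl_vec (p+q) x = (\<lambda>C. \<Sum>a\<in>{p..<p+q}. x a * cl_e a C)"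
    unfolding cl_vec_as_sum using assms by (intro ext sum.mono_neutral_right) auto
  then show ?thesis
    unfolding iota_op_def
    by (simp add: cl_mult_lincomb_right rho_lincomb in_cl0_head_e)
qed

lemma rho_iota_gen_square:
  assumes "\<forall>i. i < p \<or> i \<ge> p+q \<longrightarrow> x i = 0" "(\<Sum>i\<in>{p..<p+q}. (x i)\<^sup>2) = 1"
  shows "\<rho> (cl_mult p q (cl_blade {0..<p'}) (cl_vec (p+q) x))
           (\<rho> (cl_mult p q (cl_blade {0..<p'}) (cl_vec (p+q) x)) w) = - w"
proof -
  let ?K = "{p..<p+q}"
  have K: "p' \<le> k \<and> k < p+q" if "k \<in> ?K" for k using that p'_le_p by auto
  have "linear (iota_op k)" for k
    unfolding iota_op_def by (rule rho_linear[OF in_cl0_head_e])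
  then have "(\<Sum>k\<in>?K. x k *\<^sub>R iota_op k (\<Sum>l\<in>?K. x l *\<^sub>R iota_op l w))
      = (\<Sum>k\<in>?K. \<Sum>l\<in>?K. (x k * x l) *\<^sub>R iota_op k (iota_op l w))"
    by (simp add: linear_sum linear_scale scaleR_sum_right o_def)
  also have "\<dots> = - (\<Sum>k\<in>?K. \<Sum>l\<in>?K. (x k * x l) *\<^sub>R rho_pair k l w)"
    using K by (simp add: iota_op_compose sum_negf)
  also have "(\<Sum>k\<in>?K. \<Sum>l\<in>?K. (x k * x l) *\<^sub>R rho_pair k l w) = (\<Sum>k\<in>?K. (x k * x k) *\<^sub>R rho_pair k k w)"
  proof (rule sum_square_skew_offdiag)
    fix k l assume "k \<in> ?K" "l \<in> ?K" "k \<noteq> l"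
    then show "(x l * x k) *\<^sub>R rho_pair l k w = - ((x k * x l) *\<^sub>R rho_pair k l w)"
      using rho_pair_antisym[of k l w] K by (simp add: mult.commute)
  qed simp
  also have "\<dots> = (\<Sum>k\<in>?K. (x k)\<^sup>2 *\<^sub>R w)"
    by (intro sum.cong refl) (auto simp: rho_pair_diag metric_def power2_eq_square)
  also have "\<dots> = w" using assms(2) by (simp flip: scaleR_sum_left)
  finally show ?thesis using rho_iota_gen[OF assms(1)] by simp
qed

lemma in_cl0_K_hat_gen:
  assumes "g \<in> spin_p'_gens p q p' \<union> spin0_gens p q p' \<union> iota_pin_gens p q p'"
  shows "in_cl0 (p+q) g"
  using assms
proof (elim UnE)
  assume "g \<in> spin0_gens p q p'"
  then obtain a where "g = cl_exp p q a" "\<forall>A. a A \<noteq> 0 \<longrightarrow> A \<subseteq> {p'..<p+q} \<and> card A = 2"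
    unfolding spin0_gens_def by blast
  moreover from this(2) have "in_cl0 (p+q) a" unfolding in_cl0_def in_cl_def cl_even_def by force
  ultimately show ?thesis by (simp add: in_cl0_cl_exp)
qed (auto simp: spin_p'_gens_def iota_pin_gens_def in_cl0_mult_odd cl_odd_vec in_cl0_iota_gen)

end

section \<open>The bilinear form \<open>b(\<Pi>)\<close>\<close>

locale khat_pairing = khat_setting p q \<rho> p' p'' + equivariant_pairing p q \<rho> Pm
  for p q :: nat and \<rho> :: "cl \<Rightarrow> 'w::real_vector \<Rightarrow> 'w" and p' p'' :: nat and Pm
begin

abbreviation bf :: "'w \<Rightarrow> 'w \<Rightarrow> real" where
  "bf \<equiv> b_form p q p' \<rho> Pm"

lemma b_form_eq: "bf s t = Pm (rho_tail s) t 0"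
  unfolding b_form_def rho_tail_def using p_pos by (simp add: vinner_unit_vec metric_def)

lemma pairing_tail_move: "c = 0 \<or> p' \<le> c \<Longrightarrow> Pm (rho_tail s) t c = - Pm s (rho_tail t) c"
proof -
  assume "c = 0 \<or> p' \<le> c"
  moreover have "2 * (p' div 2) + 1 = p'" "odd (p' div 2)" using p'_mod_4 by presburger+
  ultimately have "c \<notin> {1..<2 * (p' div 2) + 1}" "(-1::real) ^ (p' div 2) = -1" by auto
  moreover have "2 * (p' div 2) < p + q" using p'_mod_4 p'_le_p by presburger
  ultimately show ?thesis
    unfolding rho_tail_def tail_prefix_blade using pairing_prefix_blade_move[of "p' div 2" c s t] by simp
qed

lemma b_form_symmetric: "bf s t = bf t s"
  unfolding b_form_eq using pairing_tail_move[of 0 s t] pairing_antisym[of "rho_tail t" s 0] by simp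

lemma b_form_bilinear: "bilinear bf"
proof -
  have left: "linear (\<lambda>s. Pm s t 0)" and right: "linear (\<lambda>t. Pm s t 0)" for s t
    using pairing_bilinear[of 0] by (simp_all add: bilinear_def)
  have "linear (\<lambda>s. Pm (rho_tail s) t 0)" for t
    using linear_compose[OF rho_tail_linear left[of t]] by (simp add: o_def)
  with right show ?thesis unfolding bilinear_def b_form_eq by blast
qed

lemma pairing_rho_pair_0:
  assumes "b < p+q" "b \<noteq> 0"
  shows "Pm (rho_pair 0 b s) t 0 = - metric p b * Pm s t b"
proof -
  define a where "a = (if b = 1 then 2 else 1 :: nat)"
  have "a < p+q" "a \<noteq> 0" "a \<noteq> b" using p'_ge_3 p'_le_p by (auto simp: a_def)
  then show ?thesis
    using pairing_rho_pair_coordinate[of a 0 b s t] assms p_pos by auto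
qed

lemma pairing_from_b_form:
  "Pm s t c = (if c < p+q then metric p c * bf (rho_tail (rho_pair 0 c s)) t else 0)"
proof (cases "c < p+q")
  case True
  have "Pm s t c = metric p c * - Pm (rho_pair 0 c s) t 0"
  proof (cases "c = 0")
    case True
    then show ?thesis using p_pos rho_pair_diag[of 0 s] by (simp add: metric_def pairing_minus_left)
  next
    case False
    then show ?thesis
      using pairing_rho_pair_0[OF \<open>c < p+q\<close> False] metric_square[of p c] by (simp add: mult.assoc[symmetric])
  qed
  then show ?thesis
    using True by (simp add: b_form_eq rho_tail_square pairing_minus_left)
qed (simp add: pairing_outside)

lemma b_form_rho_pair_0_skew:
  assumes "0 < b" "b < p'"
  shows "bf (rho_pair 0 b s) t + bf s (rho_pair 0 b t) = 0"
proof -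
  have b: "b < p+q" "b \<noteq> 0" using assms p'_le_p by auto
  have "rho_tail (rho_pair 0 b s) = - rho_pair 0 b (rho_tail s)"
    using rho_pair_commute_tail[of 0 b s] b assms p_pos by simp
  moreover have "Pm (rho_pair 0 b (rho_tail s)) t 0 + Pm (rho_tail s) (rho_pair 0 b t) 0
      = -2 * Pm (rho_tail s) t b"
    using pairing_rho_pair[of 0 b "rho_tail s" t 0] b p_pos metric_below_p'[OF assms(2)] by simp
  moreover have "Pm (rho_pair 0 b (rho_tail s)) t 0 = - Pm (rho_tail s) t b"
    using pairing_rho_pair_0[OF b] metric_below_p'[OF assms(2)] by simp
  ultimately show ?thesis by (simp add: b_form_eq pairing_minus_left)
qed

lemma b_form_rho_pair_skew:
  assumes "a < p+q" "b < p+q" "a \<noteq> b" "(a < p') = (b < p')"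
  shows "bf (rho_pair a b s) t + bf s (rho_pair a b t) = 0"
proof -
  consider "a = 0" | "b = 0" | "a \<noteq> 0" "b \<noteq> 0" by blast
  then show ?thesis
  proof cases
    case 1
    then show ?thesis using b_form_rho_pair_0_skew assms p'_ge_3 by auto
  next
    case 2
    then have "rho_pair a b w = - rho_pair 0 a w" for w using rho_pair_antisym[of 0 a w] assms by auto
    moreover have "bf (rho_pair 0 a s) t + bf s (rho_pair 0 a t) = 0"
      using b_form_rho_pair_0_skew assms 2 p'_ge_3 by auto
    ultimately show ?thesis
      using b_form_bilinear by (simp add: bilinear_lneg bilinear_rneg)
  next
    case 3
    then have "rho_tail (rho_pair a b s) = rho_pair a b (rho_tail s)"
      using rho_pair_commute_tail[OF assms(1,2), of s] assms by auto
    then show ?thesis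
      unfolding b_form_eq using pairing_rho_pair_skew[OF assms(1-3)] 3 by auto
  qed
qed

lemma b_form_rho_pair_below_p':
  assumes "a < p'" "b < p'"
  shows "bf (rho_pair a b s) t + bf s (rho_pair a b t) = (if a = b then -2 * bf s t else 0)"
proof (cases "a = b")
  case True
  have "rho_pair a a w = - w" for w
    using rho_pair_diag[of a w] metric_below_p'[OF assms(1)] assms(1) p'_le_p by simp
  then show ?thesis using True b_form_bilinear by (simp add: bilinear_lneg bilinear_rneg)
next
  case False
  then show ?thesis using b_form_rho_pair_skew[of a b s t] assms p'_le_p by simp
qed

lemma b_form_iota_op_skew:
  assumes "p' \<le> k" "k < p+q"
  shows "bf (iota_op k s) t + bf s (iota_op k t) = 0"
proof -
  have k: "k \<noteq> 0" using assms p'_ge_3 by simp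
  have "rho_tail (iota_op k s) = - rho_pair 0 k s"
    using iota_op_eq[OF assms] rho_pair_0_commute_tail[OF assms] rho_tail_square by simp
  then have "bf (iota_op k s) t = metric p k * Pm s t k"
    using pairing_rho_pair_0[OF assms(2) k] by (simp add: b_form_eq pairing_minus_left)
  moreover have "Pm (rho_tail s) (rho_tail t) k = Pm s t k"
    using pairing_tail_move[of k s "rho_tail t"] assms by (simp add: rho_tail_square pairing_minus_right)
  then have "bf s (iota_op k t) = - metric p k * Pm s t k"
    using pairing_rho_pair[of 0 k "rho_tail s" "rho_tail t" 0] pairing_rho_pair_0[OF assms(2) k] k p_pos assms
    by (simp add: b_form_eq iota_op_eq)
  ultimately show ?thesis by simp
qed

lemma b_form_cl_vec_pair_skew:
  assumes u: "\<forall>i. i \<ge> p' \<longrightarrow> u i = 0" and v: "\<forall>i. i \<ge> p' \<longrightarrow> v i = 0"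
  shows "bf (\<rho> (cl_mult p q (cl_vec (p+q) u) (cl_vec (p+q) v)) s) t
       + bf s (\<rho> (cl_mult p q (cl_vec (p+q) u) (cl_vec (p+q) v)) t)
       = (-2 * vinner p q u v) * bf s t"
proof -
  have summand: "u a * (v b * (bf (rho_pair a b s) t + bf s (rho_pair a b t)))
      = (if b = a then u a * v a * (-2 * bf s t) else 0)" for a b
  proof (cases "a < p' \<and> b < p'")
    case True
    then show ?thesis using b_form_rho_pair_below_p'[of a b s t] by auto
  next
    case False
    then have "u a * v b = 0" using u v by auto
    then show ?thesis using u v False by auto
  qed
  have "bf (\<rho> (cl_mult p q (cl_vec (p+q) u) (cl_vec (p+q) v)) s) t
      + bf s (\<rho> (cl_mult p q (cl_vec (p+q) u) (cl_vec (p+q) v)) t)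
      = (\<Sum>a<p+q. u a * (\<Sum>b<p+q. v b * (bf (rho_pair a b s) t + bf s (rho_pair a b t))))"
    unfolding rho_cl_vec_pair using b_form_bilinear
    by (simp add: bilinear_sum_left bilinear_sum_right bilinear_lmul bilinear_rmul sum.distrib distrib_left)
  also have "\<dots> = (\<Sum>a<p+q. \<Sum>b<p+q. if b = a then u a * v a * (-2 * bf s t) else 0)"
    using summand by (simp add: sum_distrib_left)
  also have "\<dots> = (\<Sum>a<p+q. u a * v a * (-2 * bf s t))"
    by (simp add: sum.delta)
  also have "\<dots> = (-2 * vinner p q u v) * bf s t"
  proof -
    have "vinner p q u v = (\<Sum>a<p+q. u a * v a)"
      unfolding vinner_def
    proof (intro sum.cong refl)
      fix a
      show "metric p a * u a * v a = u a * v a" using u metric_below_p'[of a] by (cases "a < p'") auto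
    qed
    then show ?thesis by (simp add: sum_distrib_left sum_distrib_right mult_ac)
  qed
  finally show ?thesis .
qed

section \<open>Invariance and injectivity\<close>

lemma b_form_invariant_spin_gen:
  assumes "g \<in> spin_p'_gens p q p'"
  shows "bf (\<rho> g s) (\<rho> g t) = bf s t"
proof -
  obtain u v where g: "g = cl_mult p q (cl_vec (p+q) u) (cl_vec (p+q) v)"
    and u: "\<forall>i. i \<ge> p' \<longrightarrow> u i = 0" and v: "\<forall>i. i \<ge> p' \<longrightarrow> v i = 0"
    and "\<bar>vinner p q u u\<bar> = 1" "\<bar>vinner p q v v\<bar> = 1"
    using assms unfolding spin_p'_gens_def by blast
  moreover have "0 \<le> vinner p q x x" if "\<forall>i. i \<ge> p' \<longrightarrow> x i = 0" for x
    unfolding vinner_def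
  proof (intro sum_nonneg)
    fix i
    show "0 \<le> metric p i * x i * x i" using that metric_below_p'[of i] by (cases "i < p'") auto
  qed
  ultimately have "vinner p q u u = 1" "vinner p q v v = 1" by simp_all
  then show ?thesis
    unfolding g
    by (rule bilinear_invariant_of_skew[OF b_form_bilinear b_form_cl_vec_pair_skew[OF u v]
          rho_cl_vec_pair_square])
qed

lemma b_form_invariant_spin0_gen:
  assumes "g \<in> spin0_gens p q p'"
  shows "bf (\<rho> g s) (\<rho> g t) = bf s t"
proof -
  obtain a where g: "g = cl_exp p q a"
    and a: "\<forall>A. a A \<noteq> 0 \<longrightarrow> A \<subseteq> {p'..<p+q} \<and> card A = 2"
    using assms unfolding spin0_gens_def by blast
  have even: "in_cl0 (p+q) a" using a unfolding in_cl0_def in_cl_def cl_even_def by force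
  have "bf (\<rho> (cl_blade A) s) t + bf s (\<rho> (cl_blade A) t) = 0" if "a A \<noteq> 0" for A s t
  proof -
    have A: "A \<subseteq> {p'..<p+q}" "card A = 2" using a that by auto
    then obtain x y where "x \<noteq> y" "A = {x, y}" by (auto simp: card_2_iff)
    then obtain x y where xy: "x < y" "A = {x, y}" by (metis insert_commute linorder_neq_iff)
    then have "x < p+q" "y < p+q" "p' \<le> x" "p' \<le> y" using A by auto
    moreover have "\<rho> (cl_blade A) = rho_pair x y"
      unfolding rho_pair_def using xy calculation by (simp add: cl_e_mult_pair)
    ultimately show ?thesis using xy by (simp add: b_form_rho_pair_skew)
  qed
  then have "bf (\<rho> a s) t + bf s (\<rho> a t) = 0" for s t
    by (rule bilinear_skew_of_blade_skew[OF b_form_bilinear even])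
  then show ?thesis
    unfolding g by (rule bilinear_invariant_cl_exp[OF b_form_bilinear even])
qed

lemma b_form_invariant_iota_gen:
  assumes "g \<in> iota_pin_gens p q p'"
  shows "bf (\<rho> g s) (\<rho> g t) = bf s t"
proof -
  obtain x where g: "g = cl_mult p q (cl_blade {0..<p'}) (cl_vec (p+q) x)"
    and x: "\<forall>i. i < p \<or> i \<ge> p+q \<longrightarrow> x i = 0" and "(\<Sum>i\<in>{p..<p+q}. (x i)\<^sup>2) = 1"
    using assms unfolding iota_pin_gens_def by blast
  then have "\<rho> g (\<rho> g w) = - w + 0 *\<^sub>R \<rho> g w" for w
    using rho_iota_gen_square by simp
  moreover have "bf (\<rho> g s) t + bf s (\<rho> g t) = 0 * bf s t" for s t
  proof -
    have "bf (\<rho> g s) t + bf s (\<rho> g t)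
        = (\<Sum>k\<in>{p..<p+q}. x k * (bf (iota_op k s) t + bf s (iota_op k t)))"
      unfolding g rho_iota_gen[OF x] using b_form_bilinear
      by (simp add: bilinear_sum_left bilinear_sum_right bilinear_lmul bilinear_rmul sum.distrib distrib_left)
    also have "\<dots> = 0"
      using b_form_iota_op_skew p'_le_p by (intro sum.neutral) auto
    finally show ?thesis by simp
  qed
  ultimately show ?thesis by (intro bilinear_invariant_of_skew[OF b_form_bilinear])
qed

lemma b_form_invariant_K_hat:
  assumes "g \<in> K_hat p q p'"
  shows "bf (\<rho> g s) (\<rho> g t) = bf s t"
proof -
  have "in_cl0 (p+q) g \<and> (\<forall>s t. bf (\<rho> g s) (\<rho> g t) = bf s t)"
    if "g \<in> spin_p'_gens p q p' \<union> spin0_gens p q p' \<union> iota_pin_gens p q p'" for g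
    using that in_cl0_K_hat_gen b_form_invariant_spin_gen b_form_invariant_spin0_gen b_form_invariant_iota_gen
    by blast
  then show ?thesis
    using cl_gen_group_invariant assms unfolding K_hat_def by blast
qed

lemma b_form_in_invariant_sym_forms: "bf \<in> invariant_sym_forms p q p' \<rho>"
  unfolding invariant_sym_forms_def
  using b_form_bilinear b_form_symmetric b_form_invariant_K_hat by blast

end

lemma (in khat_setting) b_form_inj_on: "inj_on (b_form p q p' \<rho>) (equiv_maps p q \<rho>)"
proof (rule inj_onI)
  fix Pm1 Pm2
  assume "Pm1 \<in> equiv_maps p q \<rho>" "Pm2 \<in> equiv_maps p q \<rho>"
    and eq: "b_form p q p' \<rho> Pm1 = b_form p q p' \<rho> Pm2"
  then interpret P1: khat_pairing p q \<rho> p' p'' Pm1 + P2: khat_pairing p q \<rho> p' p'' Pm2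
    by unfold_locales
  show "Pm1 = Pm2"
  proof (intro ext)
    fix s t c
    show "Pm1 s t c = Pm2 s t c"
      using P1.pairing_from_b_form[of s t c] P2.pairing_from_b_form[of s t c] eq by simp
  qed
qed

lemma b_form_lincomb:
  "b_form p q p' \<rho> (\<lambda>s t i. a * Pm1 s t i + c * Pm2 s t i)
     = (\<lambda>s t. a * b_form p q p' \<rho> Pm1 s t + c * b_form p q p' \<rho> Pm2 s t)"
  unfolding b_form_def vinner_def by (intro ext) (simp add: sum.distrib sum_distrib_left algebra_simps)

theorem mainTheorem6:
  fixes p q p' p'' :: nat and \<rho> :: "cl \<Rightarrow> 'w::real_vector \<Rightarrow> 'w"
  assumes "p = p' + p''" and "p' mod 4 = 3" and "cl0_module p q \<rho>"
  shows "(\<forall>Pm\<in>equiv_maps p q \<rho>. b_form p q p' \<rho> Pm \<in> invariant_sym_forms p q p' \<rho>)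
       \<and> (\<forall>Pm1\<in>equiv_maps p q \<rho>. \<forall>Pm2\<in>equiv_maps p q \<rho>. \<forall>a c.
            b_form p q p' \<rho> (\<lambda>s t i. a * Pm1 s t i + c * Pm2 s t i)
              = (\<lambda>s t. a * b_form p q p' \<rho> Pm1 s t + c * b_form p q p' \<rho> Pm2 s t))
       \<and> inj_on (b_form p q p' \<rho>) (equiv_maps p q \<rho>)"
proof -
  interpret khat_setting p q \<rho> p' p''
    using assms by unfold_locales
  have "b_form p q p' \<rho> Pm \<in> invariant_sym_forms p q p' \<rho>" if "Pm \<in> equiv_maps p q \<rho>" for Pm
  proof -
    interpret khat_pairing p q \<rho> p' p'' Pm
      using that by unfold_locales
    show ?thesis by (rule b_form_in_invariant_sym_forms)
  qed
  then show ?thesis using b_form_lincomb b_form_inj_on by blast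
qed

end
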